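(* Let $q\ge0$. With $\mathscr{B}^*(Y,X)=\int_0^T\langle Y_1,-\dot X+AX\rangle\,\mathrm{d}s+(Y_2,X(T))$, \[ \sup_{0\neq Y\in\mathcal{Y}_{k,q}\times H}\ \sup_{0\neq X\in\mathcal{X}_{k,q+1}}\frac{\mathscr{B}^*(Y,X)}{|Y|_{\mathcal{Y}_H}|X|_{\mathcal{X}_{k,q+1}}}=1 \quad\text{and}\quad \inf_{0\neq Y\in\mathcal{Y}_{k,q}\times H}\ \sup_{0\neq X\in\mathcal{X}_{k,q+1}}\frac{\mathscr{B}^*(Y,X)}{|Y|_{\mathcal{Y}_H}|X|_{\mathcal{X}_{k,q+1}}}=1 . \]
   Context: Let $V\hookrightarrow H\hookrightarrow V^*$ be a Gelfand triple of real separable Hilbert spaces, with $V$ densely embedded in $H$. Write $(\cdot,\cdot)$ for the inner product of $H$ and $\langle\cdot,\cdot\rangle$ for the duality. Let $A:V\to V^*$ be the operator associated with a symmetric, bounded, coercive bilinear form on $V$, with fractional powers defined as usual. For $\gamma\in\mathbb{R}$, $\dot H^\gamma=D(A^{\gamma/2})$ with norm $\|A^{\gamma/2}\cdot\|_H$, so $\dot H^1=V$ and $\dot H^{-1}=V^*$. Let $0=t_0<\dots<t_N=T$ and $I_i=[t_i,t_{i+1}]$. Define the semidiscrete spaces: - $\mathcal{Y}_{k,q}$: the set of $Y\in L^2((0,T);V)$ whose restriction to each $I_i$ is a polynomial in $t$ of degree $\le q$ with coefficients in $\dot H^1$; - $\mathcal{X}_{k,q+1}$: the set of $X\in L^2((0,T);V)\cap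 H^1((0,T);V^* )$ whose restriction to each $I_i$ is a polynomial in $t$ of degree $\le q+1$ with coefficients in $\dot H^1$. Define the norms: - $|Y|_{\mathcal{Y}_H}^2=\|Y_2\|_H^2+\int_0^T\|A^{1/2}Y_1\|_H^2\,\mathrm{d}s$ for $Y=(Y_1,Y_2)$; - $|X|_{\mathcal{X}_{k,q+1}}^2=\|X(0)\|_H^2+\sum_{i=0}^{N-1}\int_{I_i}\big(\|\dot X\|_{\dot H^{-1}}^2+\|\Pi_i^{(q)}X\|_{\dot H^1}^2\big)\,\mathrm{d}s$, where $\Pi_i^{(q)}$ is the $L^2(I_i)$-orthogonal projection onto polynomials in $t$ of degree $\le q$. *)

theory Defs
  imports "HOL-Analysis.Analysis"
begin

text \<open>
  The pivot space H is the type 'h (a real Hilbert space, separable = second countable).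
  A is the operator associated with a; we use the standard identities
    norm (A^(1/2) v) ^ 2 = a v v   (v in V = dot H^1),
    <Y, A X> = a Y X,
    norm (A^(-1/2) w) = sup over v in V, v nonzero, of (w,v) / sqrt (a v v)   (dot H^-1 norm),
  and, for w in V (a subset of H), the duality pairing with w equals the H inner product.
\<close>

definition gelfand_form :: "'h::{real_inner,complete_space} set \<Rightarrow> ('h \<Rightarrow> 'h \<Rightarrow> real)
    \<Rightarrow> ('h \<Rightarrow> 'h \<Rightarrow> real) \<Rightarrow> bool" where
  "gelfand_form Vs iV a \<longleftrightarrow>
     0 \<in> Vs \<and> (\<forall>u\<in>Vs. \<forall>v\<in>Vs. u + v \<in> Vs) \<and> (\<forall>r. \<forall>v\<in>Vs. r *\<^sub>R v \<in> Vs) \<and>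
     \<comment> \<open>iV is an inner product on Vs\<close>
     (\<forall>u\<in>Vs. \<forall>v\<in>Vs. iV u v = iV v u) \<and>
     (\<forall>u\<in>Vs. \<forall>v\<in>Vs. \<forall>w\<in>Vs. \<forall>r s. iV (r *\<^sub>R u + s *\<^sub>R v) w = r * iV u w + s * iV v w) \<and>
     (\<forall>v\<in>Vs. v \<noteq> 0 \<longrightarrow> iV v v > 0) \<and>
     \<comment> \<open>(Vs, iV) is complete\<close>
     (\<forall>f::nat\<Rightarrow>'h. (\<forall>n. f n \<in> Vs) \<longrightarrow>
          (\<forall>e::real>0. \<exists>M::nat. \<forall>m\<ge>M. \<forall>n\<ge>M. iV (f m - f n) (f m - f n) < e) \<longrightarrow>
          (\<exists>v\<in>Vs. \<forall>e::real>0. \<exists>M::nat. \<forall>n\<ge>M. iV (f n - v) (f n - v) < e)) \<and>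
     \<comment> \<open>(Vs, iV) is separable\<close>
     (\<exists>D. countable D \<and> D \<subseteq> Vs \<and>
          (\<forall>v\<in>Vs. \<forall>e>0. \<exists>d\<in>D. iV (v - d) (v - d) < e)) \<and>
     \<comment> \<open>continuous and dense embedding into H\<close>
     (\<exists>C. \<forall>v\<in>Vs. norm v \<le> C * sqrt (iV v v)) \<and>
     closure Vs = UNIV \<and>
     \<comment> \<open>a is a symmetric, bounded, coercive bilinear form on V\<close>
     (\<forall>u\<in>Vs. \<forall>v\<in>Vs. a u v = a v u) \<and>
     (\<forall>u\<in>Vs. \<forall>v\<in>Vs. \<forall>w\<in>Vs. \<forall>r s. a (r *\<^sub>R u + s *\<^sub>R v) w = r * a u w + s * a v w) \<and>
     (\<exists>M. \<forall>u\<in>Vs. \<forall>v\<in>Vs. \<bar>a u v\<bar> \<le> M * sqrt (iV u u) * sqrt (iV v v)) \<and>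
     (\<exists>\<alpha>>0. \<forall>v\<in>Vs. a v v \<ge> \<alpha> * iV v v)"

definition Hm1norm :: "'h::real_inner set \<Rightarrow> ('h \<Rightarrow> 'h \<Rightarrow> real) \<Rightarrow> 'h \<Rightarrow> real" where
  "Hm1norm Vs a w = Sup {inner w v / sqrt (a v v) | v. v \<in> Vs \<and> v \<noteq> 0}"

definition pev :: "nat \<Rightarrow> (nat \<Rightarrow> 'h::real_vector) \<Rightarrow> real \<Rightarrow> 'h" where
  "pev d c s = (\<Sum>j\<le>d. (s ^ j) *\<^sub>R c j)"

definition pder :: "nat \<Rightarrow> (nat \<Rightarrow> 'h::real_vector) \<Rightarrow> real \<Rightarrow> 'h" where
  "pder d c s = (\<Sum>j\<in>{1..d}. (real j * s ^ (j - 1)) *\<^sub>R c j)"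

definition proj_poly :: "nat \<Rightarrow> real \<Rightarrow> real \<Rightarrow> (real \<Rightarrow> 'h::real_inner) \<Rightarrow> (real \<Rightarrow> 'h)" where
  "proj_poly q lo hi f = (THE P. (\<exists>c. P = pev q c) \<and>
      (\<forall>j\<le>q. \<forall>h. integral {lo..hi} (\<lambda>s. s ^ j * inner (f s - P s) h) = 0))"

text \<open>Semidiscrete spaces, given by coefficient families: piece i (on [t i, t (i+1)], i < N)
  is the polynomial with coefficients y i 0, ..., y i d.\<close>
definition Ycoef :: "'h::real_vector set \<Rightarrow> nat \<Rightarrow> nat \<Rightarrow> (nat \<Rightarrow> nat \<Rightarrow> 'h) set" where
  "Ycoef Vs N q = {y. \<forall>i<N. \<forall>j\<le>q. y i j \<in> Vs}"

text \<open>X must lie in H^1(0,T;V^*): for piecewise polynomials this is continuity at the nodes.\<close>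
definition Xcoef :: "'h::real_vector set \<Rightarrow> nat \<Rightarrow> (nat \<Rightarrow> real) \<Rightarrow> nat \<Rightarrow> (nat \<Rightarrow> nat \<Rightarrow> 'h) set" where
  "Xcoef Vs N t q = {x. (\<forall>i<N. \<forall>j\<le>q+1. x i j \<in> Vs) \<and>
      (\<forall>i. Suc i < N \<longrightarrow> pev (q+1) (x i) (t (Suc i)) = pev (q+1) (x (Suc i)) (t (Suc i)))}"

definition Ynorm_sq :: "('h \<Rightarrow> 'h \<Rightarrow> real) \<Rightarrow> nat \<Rightarrow> (nat \<Rightarrow> real) \<Rightarrow> nat
    \<Rightarrow> (nat \<Rightarrow> nat \<Rightarrow> 'h::real_normed_vector) \<times> 'h \<Rightarrow> real" where
  "Ynorm_sq a N t q Y = (norm (snd Y))\<^sup>2 +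
     (\<Sum>i<N. integral {t i..t (Suc i)} (\<lambda>s. a (pev q (fst Y i) s) (pev q (fst Y i) s)))"

definition Xnorm_sq :: "'h set \<Rightarrow> ('h \<Rightarrow> 'h \<Rightarrow> real) \<Rightarrow> nat \<Rightarrow> (nat \<Rightarrow> real) \<Rightarrow> nat
    \<Rightarrow> (nat \<Rightarrow> nat \<Rightarrow> 'h::real_inner) \<Rightarrow> real" where
  "Xnorm_sq Vs a N t q x = (norm (pev (q+1) (x 0) (t 0)))\<^sup>2 +
     (\<Sum>i<N. integral {t i..t (Suc i)} (\<lambda>s.
         (Hm1norm Vs a (pder (q+1) (x i) s))\<^sup>2 +
         a (proj_poly q (t i) (t (Suc i)) (pev (q+1) (x i)) s)
           (proj_poly q (t i) (t (Suc i)) (pev (q+1) (x i)) s)))"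

definition Bstar :: "('h \<Rightarrow> 'h \<Rightarrow> real) \<Rightarrow> nat \<Rightarrow> (nat \<Rightarrow> real) \<Rightarrow> nat
    \<Rightarrow> (nat \<Rightarrow> nat \<Rightarrow> 'h::real_inner) \<times> 'h \<Rightarrow> (nat \<Rightarrow> nat \<Rightarrow> 'h) \<Rightarrow> real" where
  "Bstar a N t q Y x =
     (\<Sum>i<N. integral {t i..t (Suc i)} (\<lambda>s.
         inner (pev q (fst Y i) s) (- pder (q+1) (x i) s) + a (pev q (fst Y i) s) (pev (q+1) (x i) s)))
     + inner (snd Y) (pev (q+1) (x (N - 1)) (t N))"

end

theory Submission
  imports Defs "HOL-Computational_Algebra.Polynomial"
begin

text \<open>
  On each interval write \<open>X = P X + c L\<close>, where \<open>P\<close> is the \<open>L\<^sup>2\<close>-projection onto polynomials of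
  degree \<open>q\<close> and \<open>L\<close> the monic polynomial of degree \<open>q + 1\<close> orthogonal to them. Since \<open>L\<close> is
  invisible to every pairing with a degree-\<open>q\<close> polynomial, the interval contribution to \<open>B\<^sup>*\<close>
  is \<open>\<integral> a(Y\<^sub>1, P X) - (Y\<^sub>1, X')\<close> and \<open>\<integral> (X', P X) = (|X(t\<^sub>i\<^sub>+\<^sub>1)|\<^sup>2 - |X(t\<^sub>i)|\<^sup>2) / 2\<close>.
  The dual-norm inequality \<open>2 (w, u) - a(u, u) \<le> |w|\<^sup>2\<^sub>-\<^sub>1\<close> with \<open>u = P X - \<mu> Y\<^sub>1\<close>, together with
  \<open>2 \<mu> (Y\<^sub>2, X(T)) \<le> \<mu>\<^sup>2 |Y\<^sub>2|\<^sup>2 + |X(T)|\<^sup>2\<close>, telescopes to \<open>2 \<mu> B\<^sup>*(Y, X) \<le> \<mu>\<^sup>2 |Y|\<^sup>2 + |X|\<^sup>2\<close>,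
  so every quotient is at most 1.

  Conversely, for fixed \<open>Y\<close> solve \<open>X' + A P X = A Y\<^sub>1'\<close> interval by interval from right to left,
  where \<open>X(T)\<close> is close to \<open>Y\<^sub>2\<close> and \<open>Y\<^sub>1'\<close> differs from \<open>Y\<^sub>1\<close> by small constants. Then
  \<open>B\<^sup>*(Y, X)\<close> is the inner product of \<open>Y\<close> with \<open>(Y\<^sub>1', X(T))\<close> and \<open>|X|\<close> is at most the norm
  of that pair, so the quotient tends to 1. The end value of the discrete solution depends on its
  top coefficient through an \<open>a\<close>-symmetric injective map, which has dense range but need not be
  onto; the constants in \<open>Y\<^sub>1'\<close> absorb the defect.
\<close>

lemma two_abs_le_weighted_sum:
  fixes p P Q \<theta> :: real
  assumes "p\<^sup>2 \<le> P * Q" and "0 \<le> P" and "0 \<le> Q" and "0 < \<theta>"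
  shows "2 * \<bar>p\<bar> \<le> \<theta> * P + Q / \<theta>"
proof (rule power2_le_imp_le)
  have "(2 * \<bar>p\<bar>)\<^sup>2 = 4 * p\<^sup>2"
    by (simp add: power_mult_distrib)
  also have "\<dots> \<le> (\<theta> * P - Q / \<theta>)\<^sup>2 + 4 * (P * Q)"
    using assms(1) zero_le_power2[of "\<theta> * P - Q / \<theta>"] by linarith
  also have "\<dots> = (\<theta> * P + Q / \<theta>)\<^sup>2"
    using assms(4) by (simp add: power2_eq_square field_simps)
  finally show "(2 * \<bar>p\<bar>)\<^sup>2 \<le> (\<theta> * P + Q / \<theta>)\<^sup>2" .
  show "0 \<le> \<theta> * P + Q / \<theta>"
    using assms(2-4) by simp
qed

lemma linear_coeff_eq_0_if_quadratic_nonneg: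
  fixes \<beta> \<gamma> :: real
  assumes "\<And>\<tau>. 0 \<le> 2 * \<tau> * \<beta> + \<tau>\<^sup>2 * \<gamma>"
  shows "\<beta> = 0"
proof (rule ccontr)
  assume "\<beta> \<noteq> 0"
  define g where "g = \<bar>\<gamma>\<bar> + 1"
  have "g > 0" by (simp add: g_def)
  have "2 * (- \<beta> / g) * \<beta> + (- \<beta> / g)\<^sup>2 * \<gamma> = \<beta>\<^sup>2 * (\<gamma> - 2 * g) / g\<^sup>2"
    using \<open>g > 0\<close> by (simp add: field_simps power2_eq_square)
  also have "\<dots> < 0"
    using \<open>\<beta> \<noteq> 0\<close> \<open>g > 0\<close> by (intro divide_neg_pos mult_pos_neg) (auto simp: g_def)
  finally show False
    using assms[of "- \<beta> / g"] by simp
qed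

lemma nonpos_if_scaled_AM_GM_degenerate:
  fixes B P Q :: real
  assumes h: "\<And>\<mu>. 0 < \<mu> \<Longrightarrow> 2 * \<mu> * B \<le> \<mu>\<^sup>2 * P + Q" and "0 \<le> P" and "0 \<le> Q" and "P = 0 \<or> Q = 0"
  shows "B \<le> 0"
proof (rule ccontr)
  assume "\<not> B \<le> 0"
  show False
  proof (cases "P = 0")
    case True
    then show False
      using h[of "(Q + 1) / B"] \<open>\<not> B \<le> 0\<close> \<open>0 \<le> Q\<close> mult_pos_pos[of B "Q + 2"]
      by (simp add: field_simps)
  next
    case False
    define \<mu> where "\<mu> = B / (P + 1)"
    have "0 < \<mu>"
      using \<open>\<not> B \<le> 0\<close> \<open>0 \<le> P\<close> by (simp add: \<mu>_def)
    then have "\<mu> * (2 * B) \<le> \<mu> * (\<mu> * P)"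
      using h[OF \<open>0 < \<mu>\<close>] False assms(4) by (simp add: power2_eq_square algebra_simps)
    then have "2 * B \<le> \<mu> * P"
      using \<open>0 < \<mu>\<close> by simp
    moreover have "\<mu> * P < B"
      using \<open>\<not> B \<le> 0\<close> \<open>0 \<le> P\<close> by (simp add: \<mu>_def field_simps)
    ultimately show False
      using \<open>\<not> B \<le> 0\<close> by simp
  qed
qed

lemma le_sqrt_mult_sqrt_if_scaled_AM_GM:
  fixes B P Q :: real
  assumes h: "\<And>\<mu>. 0 < \<mu> \<Longrightarrow> 2 * \<mu> * B \<le> \<mu>\<^sup>2 * P + Q" and "0 \<le> P" and "0 \<le> Q"
  shows "B \<le> sqrt P * sqrt Q"
proof (cases "0 < P \<and> 0 < Q")
  case True
  define \<mu> where "\<mu> = sqrt Q / sqrt P"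
  have "0 < \<mu>" and "\<mu>\<^sup>2 * P = Q"
    using True by (simp_all add: \<mu>_def power_divide)
  then have "\<mu> * B \<le> Q"
    using h[OF \<open>0 < \<mu>\<close>] by simp
  then have "B \<le> Q / \<mu>"
    using \<open>0 < \<mu>\<close> by (simp add: field_simps)
  also have "Q / \<mu> = sqrt P * sqrt Q"
    using True real_div_sqrt[of Q] by (simp add: \<mu>_def field_simps)
  finally show ?thesis .
next
  case False
  then have "B \<le> 0"
    using nonpos_if_scaled_AM_GM_degenerate[OF h assms(2,3)] assms(2,3) by linarith
  then show ?thesis
    using assms(2,3) by (meson order.trans mult_nonneg_nonneg real_sqrt_ge_zero)
qed

lemma inner_perturbation:
  fixes u e :: "'a::real_inner"
  assumes "0 < \<theta>"
  shows "(1 - \<theta> / 2) * (norm u)\<^sup>2 - (1 + 1 / \<theta>) * (norm e)\<^sup>2 \<le> inner u (u + e)"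
    and "(norm (u + e))\<^sup>2 \<le> (1 + \<theta>) * (norm u)\<^sup>2 + (1 + 1 / \<theta>) * (norm e)\<^sup>2"
proof -
  have AM_GM: "2 * \<bar>inner u e\<bar> \<le> \<theta> * (norm u)\<^sup>2 + (norm e)\<^sup>2 / \<theta>"
    using two_abs_le_weighted_sum[OF _ _ _ assms] Cauchy_Schwarz_ineq[of u e]
    by (simp add: power2_norm_eq_inner)
  have "(norm e)\<^sup>2 / \<theta> \<le> 2 * ((1 + 1 / \<theta>) * (norm e)\<^sup>2)"
    using assms by (simp add: field_simps)
  moreover have "(1 - \<theta> / 2) * (norm u)\<^sup>2 = (norm u)\<^sup>2 - \<theta> * (norm u)\<^sup>2 / 2"
    by (simp add: algebra_simps)
  moreover have "inner u (u + e) = (norm u)\<^sup>2 + inner u e"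
    by (simp add: inner_add_right power2_norm_eq_inner)
  ultimately show "(1 - \<theta> / 2) * (norm u)\<^sup>2 - (1 + 1 / \<theta>) * (norm e)\<^sup>2 \<le> inner u (u + e)"
    using AM_GM by linarith
  have "(norm (u + e))\<^sup>2 = (norm u)\<^sup>2 + 2 * inner u e + (norm e)\<^sup>2"
    by (simp add: power2_norm_eq_inner inner_add_left inner_add_right inner_commute[of e u])
  moreover have "(1 + \<theta>) * (norm u)\<^sup>2 + (1 + 1 / \<theta>) * (norm e)\<^sup>2
      = (norm u)\<^sup>2 + \<theta> * (norm u)\<^sup>2 + (norm e)\<^sup>2 + (norm e)\<^sup>2 / \<theta>"
    by (simp add: algebra_simps)
  ultimately show "(norm (u + e))\<^sup>2 \<le> (1 + \<theta>) * (norm u)\<^sup>2 + (1 + 1 / \<theta>) * (norm e)\<^sup>2"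
    using AM_GM by linarith
qed

lemma ratio_ge_if_nearly_aligned:
  fixes A B X \<theta> :: real
  assumes "0 < A" and "0 < \<theta>" and "\<theta> \<le> 1 / 2"
    and "(1 - \<theta>) * A \<le> B" and "X \<le> (1 + \<theta>)\<^sup>2 * A" and "B \<le> sqrt A * sqrt X"
  shows "1 - 2 * \<theta> \<le> B / (sqrt A * sqrt X)"
proof -
  have "0 < (1 - \<theta>) * A"
    using assms(1,3) by simp
  then have "0 < B"
    using assms(4) by linarith
  then have "0 < sqrt A * sqrt X"
    using assms(6) by linarith
  have "sqrt X \<le> (1 + \<theta>) * sqrt A"
    using real_sqrt_le_mono[OF assms(5)] assms(2) by (simp add: real_sqrt_mult)
  then have "sqrt A * sqrt X \<le> (1 + \<theta>) * A"
    using assms(1) mult_left_mono[of "sqrt X" "(1 + \<theta>) * sqrt A" "sqrt A"]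
    by (simp add: algebra_simps)
  then have "(1 - \<theta>) * A / ((1 + \<theta>) * A) \<le> B / (sqrt A * sqrt X)"
    using assms(1,2,4) \<open>0 < B\<close> \<open>0 < sqrt A * sqrt X\<close> by (intro frac_le) auto
  moreover have "1 - 2 * \<theta> \<le> (1 - \<theta>) / (1 + \<theta>)"
    using assms(2) by (simp add: field_simps power2_eq_square)
  ultimately show ?thesis
    using assms(1) by simp
qed

lemma SUP_ereal_eq_1_if_approx:
  fixes f :: "'a \<Rightarrow> real"
  assumes "\<And>x. x \<in> S \<Longrightarrow> f x \<le> 1" and "\<And>\<epsilon>. 0 < \<epsilon> \<Longrightarrow> \<exists>x\<in>S. 1 - \<epsilon> \<le> f x"
  shows "(SUP x\<in>S. ereal (f x)) = 1"
proof (rule antisym)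
  show "(SUP x\<in>S. ereal (f x)) \<le> 1"
    using assms(1) by (intro SUP_least) simp
  show "1 \<le> (SUP x\<in>S. ereal (f x))"
  proof (rule ereal_le_epsilon2)
    fix \<epsilon> :: real assume "0 < \<epsilon>"
    then obtain x where "x \<in> S" "1 - \<epsilon> \<le> f x"
      using assms(2) by blast
    then have "ereal (1 - \<epsilon>) \<le> (SUP x\<in>S. ereal (f x))"
      by (intro SUP_upper2) auto
    then show "1 \<le> (SUP x\<in>S. ereal (f x)) + ereal \<epsilon>"
      by (metis add_right_mono diff_add_cancel one_ereal_def plus_ereal.simps(1))
  qed
qed

lemma vanishes_if_integral_nonpos:
  fixes f :: "real \<Rightarrow> real"
  assumes "continuous_on {lo..hi} f" and "lo < hi" and "\<And>s. s \<in> {lo..hi} \<Longrightarrow> 0 \<le> f s"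
    and "integral {lo..hi} f \<le> 0" and "s \<in> {lo..hi}"
  shows "f s = 0"
proof -
  have "0 \<le> integral {lo..hi} f"
    using assms(1,3) by (intro integral_nonneg integrable_continuous_interval) auto
  then show ?thesis
    using integral_eq_0_iff[OF assms(1,2)] assms(3-5) by simp
qed

section \<open>Vector-valued polynomials\<close>

lemma pev_has_vector_derivative: "(pev d c has_vector_derivative pder d c s) (at s within S)"
proof -
  have "((\<lambda>s. (s ^ j) *\<^sub>R c j) has_vector_derivative
      s ^ j *\<^sub>R 0 + (real j * s ^ (j - Suc 0)) *\<^sub>R c j) (at s within S)" for j
    by (rule has_vector_derivative_scaleR[OF DERIV_pow has_vector_derivative_const])
  then have "(pev d c has_vector_derivative (\<Sum>j\<le>d. (real j * s ^ (j - 1)) *\<^sub>R c j)) (at s within S)"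
    unfolding pev_def by (intro has_vector_derivative_sum) simp
  moreover have "{..d} = insert 0 {1..d}" by auto
  ultimately show ?thesis
    unfolding pder_def by simp
qed

lemma continuous_on_pev [continuous_intros]: "continuous_on S (pev d (c :: nat \<Rightarrow> 'h::real_normed_vector))"
  unfolding pev_def by (intro continuous_intros)

lemma continuous_on_pder [continuous_intros]: "continuous_on S (pder d (c :: nat \<Rightarrow> 'h::real_normed_vector))"
  unfolding pder_def by (intro continuous_intros)

lemma pder_Suc_eq_pev: "pder (Suc d) c s = pev d (\<lambda>j. real (Suc j) *\<^sub>R c (Suc j)) s"
proof -
  have "pder (Suc d) c s = (\<Sum>j\<in>Suc ` {..d}. (real j * s ^ (j - 1)) *\<^sub>R c j)"
    unfolding pder_def image_Suc_atMost by simp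
  also have "\<dots> = pev d (\<lambda>j. real (Suc j) *\<^sub>R c (Suc j)) s"
    unfolding pev_def by (subst sum.reindex) (auto simp: mult.commute)
  finally show ?thesis .
qed

lemma pev_Suc: "pev (Suc d) c s = pev d c s + (s ^ Suc d) *\<^sub>R c (Suc d)"
  unfolding pev_def by simp

lemma pev_zero [simp]: "pev d (\<lambda>_. 0) s = 0"
  unfolding pev_def by simp

lemma pev_add: "pev d (\<lambda>j. f j + g j) s = pev d f s + pev d g s"
  unfolding pev_def by (simp add: scaleR_add_right sum.distrib)

lemma pev_diff: "pev d (\<lambda>j. f j - g j) s = pev d f s - pev d g s"
  unfolding pev_def by (simp add: scaleR_diff_right sum_subtractf)

lemma pev_scale: "pev d (\<lambda>j. r *\<^sub>R f j) s = r *\<^sub>R pev d f s"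
  unfolding pev_def by (simp add: scaleR_sum_right mult.commute)

lemma pev_const: "pev d (\<lambda>j. if j = 0 then v else 0) s = v"
  unfolding pev_def by (simp add: if_distrib cong: if_cong)

lemma inner_pev_left: "inner (pev d c s) h = (\<Sum>j\<le>d. s ^ j * inner (c j) h)"
  unfolding pev_def by (simp add: inner_sum_left)

lemma inner_pev_right: "inner h (pev d c s) = (\<Sum>j\<le>d. s ^ j * inner h (c j))"
  unfolding pev_def by (simp add: inner_sum_right)

lemma real_poly_coeff_eq_0_if_vanishing:
  fixes lo hi :: real
  assumes "lo < hi" and "\<And>s. s \<in> {lo..hi} \<Longrightarrow> (\<Sum>j\<le>d. b j * s ^ j) = 0" and "j \<le> d"
  shows "b j = 0"
proof -
  define p where "p = (\<Sum>j\<le>d. monom (b j) j)"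
  have "{lo..hi} \<subseteq> {s. poly p s = 0}"
    using assms(2) by (auto simp: p_def poly_sum poly_monom)
  then have "p = 0"
    using poly_roots_finite[of p] infinite_Icc[OF assms(1)] finite_subset by blast
  moreover have "coeff p j = b j"
    using assms(3) by (simp add: p_def coeff_sum coeff_monom)
  ultimately show ?thesis
    by simp
qed

lemma pev_coeff_eq_0_if_vanishing:
  fixes c :: "nat \<Rightarrow> 'h::real_inner"
  assumes "lo < hi" and "\<And>s. s \<in> {lo..hi} \<Longrightarrow> pev d c s = 0" and "j \<le> d"
  shows "c j = 0"
proof -
  have "inner (c j) (c j) = 0"
    using real_poly_coeff_eq_0_if_vanishing[OF assms(1) _ assms(3), of "\<lambda>k. inner (c k) (c j)"] assms(2)
    by (simp add: inner_pev_left[symmetric] mult.commute)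
  then show ?thesis by simp
qed

lemma has_integral_inner_pder_pev:
  fixes x :: "nat \<Rightarrow> 'h::real_inner"
  assumes "lo \<le> hi"
  shows "((\<lambda>s. inner (pder d x s) (pev d x s)) has_integral
          ((norm (pev d x hi))\<^sup>2 - (norm (pev d x lo))\<^sup>2) / 2) {lo..hi}"
proof -
  have "((\<lambda>s. inner (pev d x s) (pev d x s)) has_vector_derivative 2 * inner (pder d x s) (pev d x s))
      (at s within {lo..hi})" for s
  proof -
    have D: "(pev d x has_derivative (\<lambda>h. h *\<^sub>R pder d x s)) (at s within {lo..hi})"
      using pev_has_vector_derivative by (simp add: has_vector_derivative_def)
    show ?thesis
      using has_derivative_inner[OF D D]
      by (simp add: has_vector_derivative_def inner_commute algebra_simps)
  qed
  then have "((\<lambda>s. 2 * inner (pder d x s) (pev d x s)) has_integral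
      (inner (pev d x hi) (pev d x hi) - inner (pev d x lo) (pev d x lo))) {lo..hi}"
    by (intro fundamental_theorem_of_calculus[OF assms]) auto
  from has_integral_cmul[OF this, of "1/2"] show ?thesis
    by (simp add: power2_norm_eq_inner diff_divide_distrib)
qed

section \<open>The monic orthogonal polynomial and the projection\<close>

definition poly_inner :: "real \<Rightarrow> real \<Rightarrow> real poly \<Rightarrow> real poly \<Rightarrow> real" where
  "poly_inner lo hi f g = integral {lo..hi} (\<lambda>s. poly f s * poly g s)"

lemma poly_inner_commute: "poly_inner lo hi f g = poly_inner lo hi g f"
  unfolding poly_inner_def by (simp add: mult.commute)

lemma poly_inner_add_left: "poly_inner lo hi (f + g) u = poly_inner lo hi f u + poly_inner lo hi g u"
  unfolding poly_inner_def
  by (simp add: distrib_right integral_add integrable_continuous_interval continuous_intros)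

lemma poly_inner_diff_left: "poly_inner lo hi (f - g) u = poly_inner lo hi f u - poly_inner lo hi g u"
  unfolding poly_inner_def
  by (simp add: left_diff_distrib integral_diff integrable_continuous_interval continuous_intros)

lemma poly_inner_smult_left: "poly_inner lo hi (smult c f) u = c * poly_inner lo hi f u"
  unfolding poly_inner_def by (simp add: mult.assoc)

lemma poly_inner_add_right: "poly_inner lo hi u (f + g) = poly_inner lo hi u f + poly_inner lo hi u g"
  by (simp only: poly_inner_commute[of lo hi u] poly_inner_add_left)

lemma poly_inner_smult_right: "poly_inner lo hi u (smult c f) = c * poly_inner lo hi u f"
  by (simp only: poly_inner_commute[of lo hi u] poly_inner_smult_left)

lemma poly_inner_self_pos:
  assumes "lo < hi" and "f \<noteq> 0"
  shows "0 < poly_inner lo hi f f"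
proof -
  have "0 \<le> poly_inner lo hi f f"
    unfolding poly_inner_def
    by (intro integral_nonneg integrable_continuous_interval continuous_intros) auto
  moreover have "poly_inner lo hi f f \<noteq> 0"
  proof
    assume "poly_inner lo hi f f = 0"
    then have "{lo..hi} \<subseteq> {s. poly f s = 0}"
      unfolding poly_inner_def using assms(1)
      by (subst (asm) integral_eq_0_iff) (auto intro!: continuous_intros)
    then show False
      using poly_roots_finite[OF assms(2)] infinite_Icc[OF assms(1)] finite_subset by blast
  qed
  ultimately show ?thesis by simp
qed

lemma degree_le_Suc_decompose:
  fixes u p :: "real poly"
  assumes "degree u \<le> Suc n" and "degree p \<le> Suc n" and "coeff p (Suc n) = 1"
  shows "degree (u - smult (coeff u (Suc n)) p) \<le> n"
proof (rule degree_le, intro allI impI)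
  fix i assume "n < i"
  then consider "i = Suc n" | "Suc n < i" by linarith
  then show "coeff (u - smult (coeff u (Suc n)) p) i = 0"
  proof cases
    case 1
    then show ?thesis using assms(3) by simp
  next
    case 2
    then show ?thesis using assms(1,2) by (simp add: coeff_eq_0)
  qed
qed

lemma poly_projection_step:
  assumes "lo < hi" and p_top: "coeff p (Suc n) = 1" and p_deg: "degree p \<le> Suc n"
    and p_orth: "\<And>u. degree u \<le> n \<Longrightarrow> poly_inner lo hi p u = 0"
    and "degree r1 \<le> n" and r1: "\<And>u. degree u \<le> n \<Longrightarrow> poly_inner lo hi (f - r1) u = 0"
  shows "\<exists>r. degree r \<le> Suc n \<and> (\<forall>u. degree u \<le> Suc n \<longrightarrow> poly_inner lo hi (f - r) u = 0)"
proof -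
  have "p \<noteq> 0"
    using p_top by auto
  then have "0 < poly_inner lo hi p p"
    by (rule poly_inner_self_pos[OF \<open>lo < hi\<close>])
  define \<beta> where "\<beta> = poly_inner lo hi (f - r1) p / poly_inner lo hi p p"
  define r where "r = r1 + smult \<beta> p"
  have "degree r \<le> Suc n"
    using \<open>degree r1 \<le> n\<close> p_deg
    by (auto simp: r_def intro!: degree_add_le order.trans[OF degree_smult_le])
  moreover have "poly_inner lo hi (f - r) u = 0" if "degree u \<le> Suc n" for u
  proof -
    define \<gamma> where "\<gamma> = coeff u (Suc n)"
    define u' where "u' = u - smult \<gamma> p"
    have "degree u' \<le> n"
      unfolding u'_def \<gamma>_def using that p_deg p_top by (rule degree_le_Suc_decompose)
    have u: "u = u' + smult \<gamma> p"
      by (simp add: u'_def)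
    have "f - r = (f - r1) - smult \<beta> p"
      by (simp add: r_def)
    then have "poly_inner lo hi (f - r) u = poly_inner lo hi (f - r1) u - \<beta> * poly_inner lo hi p u"
      by (simp only: poly_inner_diff_left poly_inner_smult_left)
    also have "\<dots> = \<gamma> * (poly_inner lo hi (f - r1) p - \<beta> * poly_inner lo hi p p)"
      using r1[OF \<open>degree u' \<le> n\<close>] p_orth[OF \<open>degree u' \<le> n\<close>]
      unfolding u by (simp add: poly_inner_add_right poly_inner_smult_right algebra_simps)
    also have "\<dots> = 0"
      using \<open>0 < poly_inner lo hi p p\<close> by (simp add: \<beta>_def)
    finally show ?thesis .
  qed
  ultimately show ?thesis
    by blast
qed

lemma exists_poly_projection:
  assumes "lo < hi"
  shows "\<exists>r. degree r \<le> n \<and> (\<forall>u. degree u \<le> n \<longrightarrow> poly_inner lo hi (f - r) u = 0)"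
proof (induction n arbitrary: f)
  case 0
  define r where "r = [:poly_inner lo hi f 1 / (hi - lo):]"
  have "poly_inner lo hi r 1 = poly_inner lo hi f 1"
    using assms by (simp add: r_def poly_inner_def)
  then have orth: "poly_inner lo hi (f - r) (smult c 1) = 0" for c
    by (simp only: poly_inner_smult_right poly_inner_diff_left) simp
  have "poly_inner lo hi (f - r) u = 0" if "degree u \<le> 0" for u
  proof -
    have "u = smult (coeff u 0) 1"
      using that
      by (metis degree_0_id le_zero_eq mult.right_neutral one_pCons smult_0_right smult_pCons)
    then show ?thesis
      using orth by metis
  qed
  then show ?case
    by (intro exI[of _ r]) (simp add: r_def)
next
  case (Suc n)
  obtain r0 where "degree r0 \<le> n" and r0: "\<And>u. degree u \<le> n \<Longrightarrow> poly_inner lo hi (monom 1 (Suc n) - r0) u = 0"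
    using Suc.IH[of "monom 1 (Suc n)"] by blast
  moreover obtain r1 where "degree r1 \<le> n" "\<And>u. degree u \<le> n \<Longrightarrow> poly_inner lo hi (f - r1) u = 0"
    using Suc.IH[of f] by blast
  moreover have "coeff (monom 1 (Suc n) - r0) (Suc n) = 1" "degree (monom 1 (Suc n) - r0) \<le> Suc n"
    using \<open>degree r0 \<le> n\<close> by (auto simp: coeff_eq_0 degree_diff_le degree_monom_eq)
  ultimately show ?case
    using poly_projection_step[OF assms] by blast
qed

definition monic_orthogonal :: "nat \<Rightarrow> real \<Rightarrow> real \<Rightarrow> real poly \<Rightarrow> bool" where
  "monic_orthogonal q lo hi L \<longleftrightarrow> degree L = Suc q \<and> coeff L (Suc q) = 1 \<and>
     (\<forall>u. degree u \<le> q \<longrightarrow> poly_inner lo hi L u = 0)"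

lemma exists_monic_orthogonal: "lo < hi \<Longrightarrow> \<exists>L. monic_orthogonal q lo hi L"
proof -
  assume "lo < hi"
  then obtain r where "degree r \<le> q" and r: "\<forall>u. degree u \<le> q \<longrightarrow> poly_inner lo hi (monom 1 (Suc q) - r) u = 0"
    using exists_poly_projection by blast
  then have "coeff (monom 1 (Suc q) - r) (Suc q) = 1" "degree (monom 1 (Suc q) - r) \<le> Suc q"
    by (auto simp: coeff_eq_0 degree_diff_le degree_monom_eq)
  then have "degree (monom 1 (Suc q) - r) = Suc q"
    by (metis le_antisym le_degree zero_neq_one)
  then show ?thesis
    using r \<open>coeff (monom 1 (Suc q) - r) (Suc q) = 1\<close> unfolding monic_orthogonal_def by blast
qed

lemma integral_monic_orthogonal_mult:
  assumes "monic_orthogonal q lo hi L"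
  shows "integral {lo..hi} (\<lambda>s. poly L s * (\<Sum>j\<le>q. s ^ j * b j)) = 0"
proof -
  have "degree (\<Sum>j\<le>q. monom (b j) j) \<le> q"
    by (intro degree_sum_le) (auto intro: order.trans[OF degree_monom_le])
  then have "poly_inner lo hi L (\<Sum>j\<le>q. monom (b j) j) = 0"
    using assms unfolding monic_orthogonal_def by blast
  then show ?thesis
    unfolding poly_inner_def by (simp add: poly_sum poly_monom mult.commute)
qed

lemma integral_add_monic_orthogonal:
  assumes "monic_orthogonal q lo hi L" and "continuous_on {lo..hi} F"
  shows "integral {lo..hi} (\<lambda>s. F s + poly L s * (\<Sum>j\<le>q. s ^ j * b j)) = integral {lo..hi} F"
  using integral_monic_orthogonal_mult[OF assms(1)] assms(2)
  by (subst integral_add) (auto intro!: integrable_continuous_interval continuous_intros)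

definition proj_coef :: "nat \<Rightarrow> real poly \<Rightarrow> (nat \<Rightarrow> 'h::real_vector) \<Rightarrow> nat \<Rightarrow> 'h" where
  "proj_coef q L x j = x j - coeff L j *\<^sub>R x (Suc q)"

lemma pev_Suc_decompose:
  assumes "monic_orthogonal q lo hi L"
  shows "pev (Suc q) x s = pev q (proj_coef q L x) s + poly L s *\<^sub>R x (Suc q)"
proof -
  have "poly L s = (\<Sum>j\<le>q. coeff L j * s ^ j) + s ^ Suc q"
    using assms unfolding monic_orthogonal_def poly_altdef by simp
  then show ?thesis
    unfolding proj_coef_def pev_diff pev_Suc
    by (simp add: pev_def scaleR_add_left scaleR_sum_left algebra_simps)
qed

lemma pev_coeff_eq_0_if_L2_orthogonal:
  fixes c :: "nat \<Rightarrow> 'h::real_inner"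
  assumes "lo < hi" and orth: "\<And>j h. j \<le> q \<Longrightarrow> integral {lo..hi} (\<lambda>s. s ^ j * inner (pev q c s) h) = 0"
    and "j \<le> q"
  shows "c j = 0"
proof -
  have "integral {lo..hi} (\<lambda>s. inner (pev q c s) (pev q c s))
      = (\<Sum>k\<le>q. integral {lo..hi} (\<lambda>s. s ^ k * inner (pev q c s) (c k)))"
    unfolding inner_pev_right[of "pev q c _"]
    by (rule integral_sum) (auto intro!: integrable_continuous_interval continuous_intros)
  also have "\<dots> = 0"
    using orth by simp
  finally have "\<forall>s\<in>{lo..hi}. inner (pev q c s) (pev q c s) = 0"
    using assms(1) by (subst (asm) integral_eq_0_iff) (auto intro!: continuous_intros)
  then show ?thesis
    using pev_coeff_eq_0_if_vanishing[OF assms(1) _ assms(3), of c] by simp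
qed

lemma proj_poly_eqI:
  fixes f :: "real \<Rightarrow> 'h::real_inner"
  assumes "lo < hi" and "continuous_on {lo..hi} f"
    and orth: "\<And>j h. j \<le> q \<Longrightarrow> integral {lo..hi} (\<lambda>s. s ^ j * inner (f s - pev q c s) h) = 0"
  shows "proj_poly q lo hi f = pev q c"
  unfolding proj_poly_def
proof (rule the_equality)
  fix P assume "(\<exists>c. P = pev q c) \<and>
      (\<forall>j\<le>q. \<forall>h. integral {lo..hi} (\<lambda>s. s ^ j * inner (f s - P s) h) = 0)"
  then obtain c' where P: "P = pev q c'"
    and orth': "\<And>j h. j \<le> q \<Longrightarrow> integral {lo..hi} (\<lambda>s. s ^ j * inner (f s - pev q c' s) h) = 0"
    by blast
  have "integral {lo..hi} (\<lambda>s. s ^ j * inner (pev q (\<lambda>k. c k - c' k) s) h) = 0" if "j \<le> q" for j h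
  proof -
    have "(\<lambda>s. s ^ j * inner (pev q (\<lambda>k. c k - c' k) s) h)
        = (\<lambda>s. s ^ j * inner (f s - pev q c' s) h - s ^ j * inner (f s - pev q c s) h)"
      by (simp add: pev_diff inner_diff_left algebra_simps)
    then show ?thesis
      using orth[OF that] orth'[OF that] assms(2)
      by (simp add: integral_diff integrable_continuous_interval continuous_intros)
  qed
  then have "c k = c' k" if "k \<le> q" for k
    using pev_coeff_eq_0_if_L2_orthogonal[OF assms(1) _ that, of "\<lambda>k. c k - c' k"] by simp
  then show "P = pev q c"
    unfolding P pev_def by (intro ext sum.cong) auto
qed (use orth in blast)

lemma proj_poly_pev_Suc:
  assumes "lo < hi" and L: "monic_orthogonal q lo hi L"
  shows "proj_poly q lo hi (pev (Suc q) x) = pev q (proj_coef q L x)"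
proof (rule proj_poly_eqI[OF assms(1)])
  fix j h assume "j \<le> q"
  have "(\<lambda>s. s ^ j * inner (pev (Suc q) x s - pev q (proj_coef q L x) s) h)
      = (\<lambda>s. inner (x (Suc q)) h * (poly L s * (\<Sum>k\<le>q. s ^ k * (if k = j then 1 else 0))))"
    using \<open>j \<le> q\<close> by (auto simp: pev_Suc_decompose[OF L] if_distrib cong: if_cong)
  then show "integral {lo..hi} (\<lambda>s. s ^ j * inner (pev (Suc q) x s - pev q (proj_coef q L x) s) h) = 0"
    using integral_monic_orthogonal_mult[OF L] by simp
qed (intro continuous_intros)

section \<open>The energy space\<close>

locale energy_space =
  fixes Vs :: "'h::real_inner set" and a :: "'h \<Rightarrow> 'h \<Rightarrow> real"
  assumes subspace: "subspace Vs"
    and a_sym: "u \<in> Vs \<Longrightarrow> v \<in> Vs \<Longrightarrow> a u v = a v u"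
    and a_linear: "u \<in> Vs \<Longrightarrow> v \<in> Vs \<Longrightarrow> w \<in> Vs \<Longrightarrow>
      a (r *\<^sub>R u + s *\<^sub>R v) w = r * a u w + s * a v w"
    and a_pos: "v \<in> Vs \<Longrightarrow> v \<noteq> 0 \<Longrightarrow> 0 < a v v"
    and a_complete: "(\<And>n. f n \<in> Vs) \<Longrightarrow>
      (\<And>e. 0 < e \<Longrightarrow> \<exists>M::nat. \<forall>m\<ge>M. \<forall>n\<ge>M. a (f m - f n) (f m - f n) < e) \<Longrightarrow>
      \<exists>v\<in>Vs. (\<lambda>n. a (f n - v) (f n - v)) \<longlonglongrightarrow> 0"
    and embedding: "\<exists>C. \<forall>v\<in>Vs. (norm v)\<^sup>2 \<le> C * a v v"
    and dense: "closure Vs = UNIV"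
    and nontrivial: "Vs \<noteq> {0}"

lemma gelfand_form_subspace: "gelfand_form Vs iV a \<Longrightarrow> subspace Vs"
  unfolding gelfand_form_def subspace_def by (elim conjE) (intro conjI)

lemma gelfand_form_iV_nonneg:
  assumes gf: "gelfand_form Vs iV a" and "v \<in> Vs"
  shows "0 \<le> iV v v"
proof -
  have iV_pos: "\<forall>v\<in>Vs. v \<noteq> 0 \<longrightarrow> iV v v > 0"
    using gf unfolding gelfand_form_def by (elim conjE) assumption
  have "\<forall>u\<in>Vs. \<forall>v\<in>Vs. \<forall>w\<in>Vs. \<forall>r s. iV (r *\<^sub>R u + s *\<^sub>R v) w = r * iV u w + s * iV v w"
    using gf unfolding gelfand_form_def by (elim conjE) assumption
  then have "iV (0 *\<^sub>R 0 + 0 *\<^sub>R 0) 0 = 0 * iV 0 0 + 0 * iV 0 0"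
    using subspace_0[OF gelfand_form_subspace[OF gf]] by blast
  then show ?thesis
    using iV_pos \<open>v \<in> Vs\<close> by (cases "v = 0") (auto intro: less_imp_le)
qed

lemma gelfand_form_norms_equivalent:
  assumes gf: "gelfand_form Vs iV a"
  obtains \<alpha> M where "0 < \<alpha>" and "\<And>v. v \<in> Vs \<Longrightarrow> \<alpha> * iV v v \<le> a v v"
    and "\<And>v. v \<in> Vs \<Longrightarrow> a v v \<le> M * iV v v"
proof -
  have "\<exists>\<alpha>>0. \<forall>v\<in>Vs. a v v \<ge> \<alpha> * iV v v"
    using gf unfolding gelfand_form_def by (elim conjE) assumption
  moreover have "\<exists>M. \<forall>u\<in>Vs. \<forall>v\<in>Vs. \<bar>a u v\<bar> \<le> M * sqrt (iV u u) * sqrt (iV v v)"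
    using gf unfolding gelfand_form_def by (elim conjE) assumption
  ultimately obtain \<alpha> M where "0 < \<alpha>" "\<And>v. v \<in> Vs \<Longrightarrow> \<alpha> * iV v v \<le> a v v"
    and bdd: "\<And>v. v \<in> Vs \<Longrightarrow> \<bar>a v v\<bar> \<le> M * sqrt (iV v v) * sqrt (iV v v)"
    by blast
  moreover have "a v v \<le> M * iV v v" if "v \<in> Vs" for v
    using bdd[OF that] gelfand_form_iV_nonneg[OF gf that] by (simp add: mult.assoc)
  ultimately show ?thesis
    using that by blast
qed

lemma gelfand_form_Cauchy_iV:
  assumes gf: "gelfand_form Vs iV a" and f: "\<And>n. f n \<in> Vs"
    and Cauchy: "\<And>e. 0 < e \<Longrightarrow> \<exists>M::nat. \<forall>m\<ge>M. \<forall>n\<ge>M. a (f m - f n) (f m - f n) < e"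
    and "0 < e"
  shows "\<exists>M::nat. \<forall>m\<ge>M. \<forall>n\<ge>M. iV (f m - f n) (f m - f n) < e"
proof -
  obtain \<alpha> M where "0 < \<alpha>" and coerc: "\<And>v. v \<in> Vs \<Longrightarrow> \<alpha> * iV v v \<le> a v v"
    and "\<And>v. v \<in> Vs \<Longrightarrow> a v v \<le> M * iV v v"
    using gelfand_form_norms_equivalent[OF gf] by metis
  obtain M :: nat where M: "\<forall>m\<ge>M. \<forall>n\<ge>M. a (f m - f n) (f m - f n) < \<alpha> * e"
    using Cauchy[of "\<alpha> * e"] \<open>e > 0\<close> \<open>\<alpha> > 0\<close> by auto
  have "iV (f m - f n) (f m - f n) < e" if "M \<le> m" "M \<le> n" for m n
    using le_less_trans[OF coerc[OF subspace_diff[OF gelfand_form_subspace[OF gf] f f]]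
        M[rule_format, OF that]]
      \<open>\<alpha> > 0\<close>
    by simp
  then show ?thesis
    by blast
qed

lemma gelfand_form_a_complete:
  assumes gf: "gelfand_form Vs iV a" and f: "\<And>n. f n \<in> Vs"
    and Cauchy: "\<And>e. 0 < e \<Longrightarrow> \<exists>M::nat. \<forall>m\<ge>M. \<forall>n\<ge>M. a (f m - f n) (f m - f n) < e"
  shows "\<exists>v\<in>Vs. (\<lambda>n. a (f n - v) (f n - v)) \<longlonglongrightarrow> 0"
proof -
  obtain \<alpha> M where "0 < \<alpha>" and coerc: "\<And>v. v \<in> Vs \<Longrightarrow> \<alpha> * iV v v \<le> a v v"
    and bdd: "\<And>v. v \<in> Vs \<Longrightarrow> a v v \<le> M * iV v v"
    using gelfand_form_norms_equivalent[OF gf] by metis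
  note sub = gelfand_form_subspace[OF gf] and iV_nonneg = gelfand_form_iV_nonneg[OF gf]
  have iV_complete: "\<forall>f::nat\<Rightarrow>'a. (\<forall>n. f n \<in> Vs) \<longrightarrow>
      (\<forall>e::real>0. \<exists>M::nat. \<forall>m\<ge>M. \<forall>n\<ge>M. iV (f m - f n) (f m - f n) < e) \<longrightarrow>
      (\<exists>v\<in>Vs. \<forall>e::real>0. \<exists>M::nat. \<forall>n\<ge>M. iV (f n - v) (f n - v) < e)"
    using gf unfolding gelfand_form_def by (elim conjE) assumption
  have Cauchy_iV: "\<forall>e>0. \<exists>M::nat. \<forall>m\<ge>M. \<forall>n\<ge>M. iV (f m - f n) (f m - f n) < e"
    using gelfand_form_Cauchy_iV[OF gf f Cauchy] by blast
  from iV_complete[rule_format, OF f Cauchy_iV[rule_format]]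
  obtain v where "v \<in> Vs" and v: "\<forall>e>0. \<exists>M::nat. \<forall>n\<ge>M. iV (f n - v) (f n - v) < e"
    by blast
  have fv: "f n - v \<in> Vs" for n
    using subspace_diff[OF sub f \<open>v \<in> Vs\<close>] .
  have "(\<lambda>n. iV (f n - v) (f n - v)) \<longlonglongrightarrow> 0"
  proof (rule LIMSEQ_I)
    fix r :: real assume "0 < r"
    then obtain M :: nat where "\<forall>n\<ge>M. iV (f n - v) (f n - v) < r"
      using v by blast
    then show "\<exists>M. \<forall>n\<ge>M. norm (iV (f n - v) (f n - v) - 0) < r"
      using iV_nonneg[OF fv] by auto
  qed
  then have upper: "(\<lambda>n. M * iV (f n - v) (f n - v)) \<longlonglongrightarrow> 0"
    by (simp add: tendsto_mult_right_zero)
  have a_nonneg: "0 \<le> a (f n - v) (f n - v)" for n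
    using coerc[OF fv[of n]] mult_nonneg_nonneg[OF less_imp_le[OF \<open>\<alpha> > 0\<close>] iV_nonneg[OF fv[of n]]]
    by linarith
  have "(\<lambda>n. a (f n - v) (f n - v)) \<longlonglongrightarrow> 0"
    by (rule tendsto_sandwich[OF always_eventually always_eventually tendsto_const upper])
      (use a_nonneg bdd[OF fv] in auto)
  then show ?thesis
    using \<open>v \<in> Vs\<close> by (rule bexI)
qed

lemma energy_space_if_gelfand_form:
  assumes gf: "gelfand_form Vs iV a" and "Vs \<noteq> {0}"
  shows "energy_space Vs a"
proof
  obtain \<alpha> M where "0 < \<alpha>" and coerc: "\<And>v. v \<in> Vs \<Longrightarrow> \<alpha> * iV v v \<le> a v v"
    and "\<And>v. v \<in> Vs \<Longrightarrow> a v v \<le> M * iV v v"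
    using gelfand_form_norms_equivalent[OF gf] by metis
  have "\<exists>C. \<forall>v\<in>Vs. norm v \<le> C * sqrt (iV v v)"
    using gf unfolding gelfand_form_def by (elim conjE) assumption
  then obtain C where emb: "\<And>v. v \<in> Vs \<Longrightarrow> norm v \<le> C * sqrt (iV v v)"
    by blast
  show "\<exists>C. \<forall>v\<in>Vs. (norm v)\<^sup>2 \<le> C * a v v"
  proof (intro exI ballI)
    fix v assume "v \<in> Vs"
    have "(norm v)\<^sup>2 \<le> (C * sqrt (iV v v))\<^sup>2"
      by (rule power_mono[OF emb[OF \<open>v \<in> Vs\<close>] norm_ge_zero])
    also have "\<dots> = C\<^sup>2 * iV v v"
      using gelfand_form_iV_nonneg[OF gf \<open>v \<in> Vs\<close>] by (simp add: power_mult_distrib)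
    also have "\<dots> \<le> C\<^sup>2 * (a v v / \<alpha>)"
      using coerc[OF \<open>v \<in> Vs\<close>] \<open>0 < \<alpha>\<close> by (intro mult_left_mono) (auto simp: field_simps)
    finally show "(norm v)\<^sup>2 \<le> C\<^sup>2 / \<alpha> * a v v" by simp
  qed
  have iV_pos: "\<forall>v\<in>Vs. v \<noteq> 0 \<longrightarrow> iV v v > 0"
    using gf unfolding gelfand_form_def by (elim conjE) assumption
  show "0 < a v v" if "v \<in> Vs" "v \<noteq> 0" for v
    using iV_pos[rule_format, OF that] coerc[OF \<open>v \<in> Vs\<close>] \<open>0 < \<alpha>\<close>
    by (meson mult_pos_pos order.strict_trans2)
  have a_sym: "\<forall>u\<in>Vs. \<forall>v\<in>Vs. a u v = a v u"
    using gf unfolding gelfand_form_def by (elim conjE) assumption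
  show "a u v = a v u" if "u \<in> Vs" "v \<in> Vs" for u v
    using a_sym[rule_format, OF that] .
  have a_linear: "\<forall>u\<in>Vs. \<forall>v\<in>Vs. \<forall>w\<in>Vs. \<forall>r s. a (r *\<^sub>R u + s *\<^sub>R v) w = r * a u w + s * a v w"
    using gf unfolding gelfand_form_def by (elim conjE) assumption
  show "a (r *\<^sub>R u + s *\<^sub>R v) w = r * a u w + s * a v w" if "u \<in> Vs" "v \<in> Vs" "w \<in> Vs" for u v w r s
    using a_linear[rule_format, OF that] .
  show "closure Vs = UNIV"
    using gf unfolding gelfand_form_def by (elim conjE) assumption
  show "\<exists>v\<in>Vs. (\<lambda>n. a (f n - v) (f n - v)) \<longlonglongrightarrow> 0"
    if "\<And>n. f n \<in> Vs" and "\<And>e. 0 < e \<Longrightarrow> \<exists>M::nat. \<forall>m\<ge>M. \<forall>n\<ge>M. a (f m - f n) (f m - f n) < e"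
    for f :: "nat \<Rightarrow> 'a"
    using gelfand_form_a_complete[OF gf that] .
qed (use gf \<open>Vs \<noteq> {0}\<close> in \<open>simp_all add: gelfand_form_subspace\<close>)

context energy_space
begin

lemmas V_0 [simp] = subspace_0[OF subspace]

lemmas V_add [simp] = subspace_add[OF subspace]

lemmas V_scale [simp] = subspace_scale[OF subspace]

lemmas V_neg [simp] = subspace_neg[OF subspace]

lemmas V_diff [simp] = subspace_diff[OF subspace]

lemmas V_sum [simp] = subspace_sum[OF subspace]

lemma a_add_left [simp]: "u \<in> Vs \<Longrightarrow> v \<in> Vs \<Longrightarrow> w \<in> Vs \<Longrightarrow> a (u + v) w = a u w + a v w"
  using a_linear[of u v w 1 1] by simp

lemma a_scale_left [simp]: "u \<in> Vs \<Longrightarrow> w \<in> Vs \<Longrightarrow> a (r *\<^sub>R u) w = r * a u w"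
  using a_linear[of u 0 w r 0] by simp

lemma a_zero_left [simp]: "w \<in> Vs \<Longrightarrow> a 0 w = 0"
  using a_scale_left[of 0 w 0] by simp

lemma a_minus_left [simp]: "u \<in> Vs \<Longrightarrow> w \<in> Vs \<Longrightarrow> a (- u) w = - a u w"
  using a_scale_left[of u w "-1"] by simp

lemma a_diff_left [simp]: "u \<in> Vs \<Longrightarrow> v \<in> Vs \<Longrightarrow> w \<in> Vs \<Longrightarrow> a (u - v) w = a u w - a v w"
  using a_add_left[of u "- v" w] by simp

lemma a_add_right [simp]: "u \<in> Vs \<Longrightarrow> v \<in> Vs \<Longrightarrow> w \<in> Vs \<Longrightarrow> a w (u + v) = a w u + a w v"
  by (simp add: a_sym[of w])

lemma a_scale_right [simp]: "u \<in> Vs \<Longrightarrow> w \<in> Vs \<Longrightarrow> a w (r *\<^sub>R u) = r * a w u"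
  by (simp add: a_sym[of w])

lemma a_zero_right [simp]: "w \<in> Vs \<Longrightarrow> a w 0 = 0"
  by (simp add: a_sym[of w])

lemma a_minus_right [simp]: "u \<in> Vs \<Longrightarrow> w \<in> Vs \<Longrightarrow> a w (- u) = - a w u"
  by (simp add: a_sym[of w])

lemma a_diff_right [simp]: "u \<in> Vs \<Longrightarrow> v \<in> Vs \<Longrightarrow> w \<in> Vs \<Longrightarrow> a w (u - v) = a w u - a w v"
  by (simp add: a_sym[of w])

lemma a_sum_left: "(\<And>j. j \<in> A \<Longrightarrow> f j \<in> Vs) \<Longrightarrow> w \<in> Vs \<Longrightarrow> a (sum f A) w = (\<Sum>j\<in>A. a (f j) w)"
  by (induction A rule: infinite_finite_induct) auto

lemma a_sum_right: "(\<And>j. j \<in> A \<Longrightarrow> f j \<in> Vs) \<Longrightarrow> w \<in> Vs \<Longrightarrow> a w (sum f A) = (\<Sum>j\<in>A. a w (f j))"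
  by (induction A rule: infinite_finite_induct) auto

lemma a_nonneg [simp]: "v \<in> Vs \<Longrightarrow> 0 \<le> a v v"
  using a_pos[of v] by (cases "v = 0") auto

lemma a_self_eq_0_iff: "v \<in> Vs \<Longrightarrow> a v v = 0 \<longleftrightarrow> v = 0"
  using a_pos[of v] by (cases "v = 0") auto

lemma a_expand:
  assumes "u \<in> Vs" and "v \<in> Vs"
  shows "a (r *\<^sub>R u + s *\<^sub>R v) (r *\<^sub>R u + s *\<^sub>R v) = r\<^sup>2 * a u u + 2 * r * s * a u v + s\<^sup>2 * a v v"
  using assms a_sym[of u v] by (simp add: power2_eq_square algebra_simps)

lemma a_Cauchy_Schwarz:
  assumes u: "u \<in> Vs" and v: "v \<in> Vs"
  shows "(a u v)\<^sup>2 \<le> a u u * a v v"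
proof (cases "v = 0")
  case False
  then have "0 < a v v" using a_pos v by blast
  note a_sym[OF v u, simp]
  have "0 \<le> a (1 *\<^sub>R u + (- (a u v / a v v)) *\<^sub>R v) (1 *\<^sub>R u + (- (a u v / a v v)) *\<^sub>R v)"
    by (rule a_nonneg) (use u v in simp)
  also have "\<dots> = a u u - (a u v)\<^sup>2 / a v v"
    unfolding a_expand[OF u v] using \<open>0 < a v v\<close> by (simp add: power2_eq_square field_simps)
  finally have "(a u v)\<^sup>2 / a v v \<le> a u u"
    by simp
  then show ?thesis
    using \<open>0 < a v v\<close> by (simp add: pos_divide_le_eq)
qed (use u in simp)

lemma two_abs_a_le: "u \<in> Vs \<Longrightarrow> v \<in> Vs \<Longrightarrow> 0 < \<theta> \<Longrightarrow> 2 * \<bar>a u v\<bar> \<le> \<theta> * a u u + a v v / \<theta>"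
  by (intro two_abs_le_weighted_sum a_Cauchy_Schwarz a_nonneg)

lemma tendsto_a_left:
  assumes f: "\<And>n. f n \<in> Vs" and "p \<in> Vs" "r \<in> Vs"
    and lim: "(\<lambda>n. a (f n - p) (f n - p)) \<longlonglongrightarrow> 0"
  shows "(\<lambda>n. a (f n) r) \<longlonglongrightarrow> a p r"
proof -
  have lim0: "(\<lambda>n. sqrt (a (f n - p) (f n - p)) * sqrt (a r r)) \<longlonglongrightarrow> 0"
    using tendsto_mult_left_zero[OF tendsto_real_sqrt[OF lim, simplified]] .
  have bound: "norm (a (f n) r - a p r) \<le> sqrt (a (f n - p) (f n - p)) * sqrt (a r r)" for n
  proof -
    have "\<bar>a (f n - p) r\<bar> \<le> sqrt (a (f n - p) (f n - p) * a r r)"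
      using a_Cauchy_Schwarz[of "f n - p" r] f assms(2,3) real_le_rsqrt
      by (simp add: abs_le_square_iff)
    then show ?thesis
      using f assms(2,3) by (simp add: real_sqrt_mult)
  qed
  have "(\<lambda>n. a (f n) r - a p r) \<longlonglongrightarrow> 0"
    by (rule Lim_null_comparison[OF always_eventually[OF allI[OF bound]] lim0])
  then show ?thesis
    by (simp add: LIM_zero_iff)
qed

context
  fixes R :: "'h set" and l :: "'h \<Rightarrow> real"
  assumes R: "subspace R" "R \<subseteq> Vs"
    and l_add: "\<And>u v. u \<in> Vs \<Longrightarrow> v \<in> Vs \<Longrightarrow> l (u + v) = l u + l v"
    and l_scale: "\<And>r v. v \<in> Vs \<Longrightarrow> l (r *\<^sub>R v) = r * l v"
begin

text \<open>The representer of \<open>l\<close> on \<open>R\<close> is the minimiser of \<open>J v = a v v - 2 l v\<close>; minimising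
  sequences are Cauchy by the parallelogram law.\<close>

lemma Cauchy_if_almost_minimizing:
  assumes rs: "\<And>n. rs n \<in> R" and m_le: "\<And>r. r \<in> R \<Longrightarrow> m \<le> a r r - 2 * l r"
    and rs_J: "\<And>n. a (rs n) (rs n) - 2 * l (rs n) < m + 1 / Suc n" and "0 < e"
  shows "\<exists>M::nat. \<forall>i\<ge>M. \<forall>j\<ge>M. a (rs i - rs j) (rs i - rs j) < e"
proof -
  have parallelogram: "a (x - y) (x - y) \<le> 2 * (a x x - 2 * l x) + 2 * (a y y - 2 * l y) - 4 * m"
    if "x \<in> R" "y \<in> R" for x y
  proof -
    have "x \<in> Vs" "y \<in> Vs" "(1/2) *\<^sub>R (x + y) \<in> R"
      using that R by (auto simp: subspace_add subspace_scale)
    then show ?thesis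
      using m_le[of "(1/2) *\<^sub>R (x + y)"] l_add[of x y] l_scale[of "x + y" "1/2"] a_sym[of x y]
      by (simp add: algebra_simps)
  qed
  obtain M :: nat where M: "4 / e < Suc M"
    using reals_Archimedean2[of "4 / e"]
    by (metis less_Suc_eq of_nat_Suc order.strict_trans2 less_imp_le of_nat_less_iff)
  have "a (rs i - rs j) (rs i - rs j) < e" if "i \<ge> M" "j \<ge> M" for i j
  proof -
    have "2 / real (Suc i) \<le> 2 / Suc M" "2 / real (Suc j) \<le> 2 / Suc M"
      using that by (auto intro!: divide_left_mono)
    then have "2 / real (Suc i) + 2 / real (Suc j) \<le> 4 / Suc M"
      by simp
    also have "\<dots> < e"
      using M \<open>e > 0\<close> by (simp add: field_simps)
    finally show ?thesis
      using parallelogram[OF rs rs, of i j] rs_J[of i] rs_J[of j] by simp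
  qed
  then show ?thesis
    by blast
qed

lemma represents_if_limit_of_almost_minimizing:
  assumes rs: "\<And>n. rs n \<in> R" and m_le: "\<And>r. r \<in> R \<Longrightarrow> m \<le> a r r - 2 * l r"
    and rs_J: "\<And>n. a (rs n) (rs n) - 2 * l (rs n) < m + 1 / Suc n"
    and "p \<in> Vs" and lim: "(\<lambda>n. a (rs n - p) (rs n - p)) \<longlonglongrightarrow> 0" and "r \<in> R"
  shows "a p r = l r"
proof (rule linear_coeff_eq_0_if_quadratic_nonneg[of "a p r - l r" "a r r", simplified])
  fix \<tau> :: real
  have "rs n \<in> Vs" "r \<in> Vs" "rs n + \<tau> *\<^sub>R r \<in> R" for n
    using rs \<open>r \<in> R\<close> R by (auto simp: subspace_add subspace_scale)
  then have "- inverse (real (Suc n)) \<le> 2 * \<tau> * (a (rs n) r - l r) + \<tau>\<^sup>2 * a r r" for n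
    using m_le[of "rs n + \<tau> *\<^sub>R r"] rs_J[of n] a_expand[of "rs n" r 1 \<tau>]
      l_add[of "rs n" "\<tau> *\<^sub>R r"] l_scale[of r \<tau>]
    by (simp add: inverse_eq_divide algebra_simps)
  moreover have "(\<lambda>n. 2 * \<tau> * (a (rs n) r - l r) + \<tau>\<^sup>2 * a r r) \<longlonglongrightarrow> 2 * \<tau> * (a p r - l r) + \<tau>\<^sup>2 * a r r"
    using tendsto_a_left[OF _ \<open>p \<in> Vs\<close> \<open>r \<in> Vs\<close> lim] \<open>\<And>n. rs n \<in> Vs\<close> by (intro tendsto_intros) auto
  ultimately show "0 \<le> 2 * \<tau> * (a p r - l r) + \<tau>\<^sup>2 * a r r"
    using LIMSEQ_le[OF tendsto_minus[OF LIMSEQ_inverse_real_of_nat]] by auto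
qed

lemma exists_representer_in_closure:
  assumes l_bounded: "\<And>v. v \<in> Vs \<Longrightarrow> (l v)\<^sup>2 \<le> C * a v v" and "0 \<le> C"
  shows "\<exists>p\<in>Vs. (\<forall>r\<in>R. a p r = l r) \<and> (\<forall>e>0. \<exists>r\<in>R. a (r - p) (r - p) < e)"
proof -
  define J where "J v = a v v - 2 * l v" for v
  have "- C \<le> J v" if "v \<in> R" for v
    using two_abs_le_weighted_sum[of "l v" "a v v" C 1] l_bounded[of v] that R \<open>0 \<le> C\<close>
    by (auto simp: J_def mult.commute)
  then have "bdd_below (J ` R)"
    by (intro bdd_belowI[of _ "- C"]) auto
  then have m_le: "Inf (J ` R) \<le> J r" if "r \<in> R" for r
    using that by (simp add: cInf_lower)
  have "\<exists>r\<in>R. J r < Inf (J ` R) + 1 / Suc n" for n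
    using cInf_lessD[of "J ` R" "Inf (J ` R) + 1 / Suc n"] subspace_0[OF R(1)] by auto
  then obtain rs where rs: "\<And>n. rs n \<in> R" and rs_J: "\<And>n. J (rs n) < Inf (J ` R) + 1 / Suc n"
    by metis
  then obtain p where "p \<in> Vs" and lim: "(\<lambda>n. a (rs n - p) (rs n - p)) \<longlonglongrightarrow> 0"
    using a_complete[of rs] Cauchy_if_almost_minimizing[OF rs m_le[unfolded J_def] rs_J[unfolded J_def]] R
    by blast
  moreover have "\<exists>r\<in>R. a (r - p) (r - p) < e" if "e > 0" for e
    using order_tendstoD(2)[OF lim that] rs by (auto simp: eventually_sequentially)
  ultimately show ?thesis
    using represents_if_limit_of_almost_minimizing[OF rs m_le[unfolded J_def] rs_J[unfolded J_def]]
    by blast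
qed

end

lemma norm_le_sqrt_a: "\<exists>C>0. \<forall>v\<in>Vs. norm v \<le> C * sqrt (a v v)"
proof -
  obtain C where C: "\<And>v. v \<in> Vs \<Longrightarrow> (norm v)\<^sup>2 \<le> C * a v v"
    using embedding by blast
  have "norm v \<le> sqrt (\<bar>C\<bar> + 1) * sqrt (a v v)" if "v \<in> Vs" for v
  proof -
    have "C * a v v \<le> (\<bar>C\<bar> + 1) * a v v"
      using a_nonneg[OF that] by (intro mult_right_mono) auto
    then have "(norm v)\<^sup>2 \<le> (\<bar>C\<bar> + 1) * a v v"
      using C[OF that] by linarith
    then show ?thesis
      by (metis real_sqrt_le_mono real_sqrt_mult real_sqrt_unique norm_ge_zero)
  qed
  then show ?thesis
    by (intro exI[of _ "sqrt (\<bar>C\<bar> + 1)"]) auto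
qed

lemma exists_V_near: "0 < e \<Longrightarrow> \<exists>z\<in>Vs. (norm (z - w))\<^sup>2 < e"
proof -
  assume "0 < e"
  then obtain z where "z \<in> Vs" "dist z w < sqrt e"
    using dense closure_approachable[of w Vs] by (metis UNIV_I real_sqrt_gt_zero)
  then show ?thesis
    using \<open>0 < e\<close> by (metis dist_norm norm_ge_zero real_sqrt_less_iff real_sqrt_abs abs_norm_cancel)
qed

lemma exists_Riesz_representer: "\<exists>u\<in>Vs. \<forall>v\<in>Vs. a u v = inner f v"
proof -
  obtain C where "C > 0" and C: "\<And>v. v \<in> Vs \<Longrightarrow> norm v \<le> C * sqrt (a v v)"
    using norm_le_sqrt_a by blast
  have "(inner f v)\<^sup>2 \<le> ((norm f * C)\<^sup>2) * a v v" if "v \<in> Vs" for v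
  proof -
    have "\<bar>inner f v\<bar> \<le> norm f * (C * sqrt (a v v))"
      using Cauchy_Schwarz_ineq2[of f v] C[OF that]
      by (meson mult_left_mono norm_ge_zero order_trans)
    then have "(inner f v)\<^sup>2 \<le> (norm f * (C * sqrt (a v v)))\<^sup>2"
      by (metis abs_ge_zero power2_abs power_mono)
    then show ?thesis
      using a_nonneg[OF that] by (simp add: power_mult_distrib)
  qed
  then show ?thesis
    using exists_representer_in_closure[of Vs "inner f" "(norm f * C)\<^sup>2"] subspace
    by (auto simp: inner_add_right)
qed

text \<open>\<open>Ainv f\<close> is \<open>A\<^sup>-\<^sup>1 f\<close>, the Riesz representative of \<open>(f, \<cdot>)\<close> in the energy inner product.\<close>
definition Ainv :: "'h \<Rightarrow> 'h" where
  "Ainv f = (SOME u. u \<in> Vs \<and> (\<forall>v\<in>Vs. a u v = inner f v))"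

lemma Ainv_in_V [simp]: "Ainv f \<in> Vs"
  and a_Ainv: "v \<in> Vs \<Longrightarrow> a (Ainv f) v = inner f v"
  using someI_ex[OF exists_Riesz_representer[of f, unfolded Bex_def]] by (auto simp: Ainv_def)

lemma eq_if_a_eq:
  assumes "u \<in> Vs" "u' \<in> Vs" and "\<And>v. v \<in> Vs \<Longrightarrow> a u v = a u' v"
  shows "u = u'"
  using assms(3)[of "u - u'"] assms(1,2) a_self_eq_0_iff[of "u - u'"] by simp

lemma linear_Ainv: "linear Ainv"
  by (intro linearI; rule eq_if_a_eq) (auto simp: a_Ainv inner_add_left)

lemma a_Ainv_sym: "u \<in> Vs \<Longrightarrow> v \<in> Vs \<Longrightarrow> a (Ainv u) v = a u (Ainv v)"
  by (simp add: a_Ainv a_sym[of u] inner_commute)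

lemma Ainv_eq_0_imp: "u \<in> Vs \<Longrightarrow> Ainv u = 0 \<Longrightarrow> u = 0"
  using a_Ainv[of u u] by simp

lemma linear_Ainv_pow: "linear (Ainv ^^ n)"
proof (induction n)
  case (Suc n)
  then show ?case
    using linear_compose[OF Suc.IH linear_Ainv] by (simp add: o_def)
qed (simp add: linear_id[unfolded id_def])

lemma Ainv_pow_in_V [simp]: "v \<in> Vs \<Longrightarrow> (Ainv ^^ n) v \<in> Vs"
  by (cases n) auto

lemma a_Ainv_pow_sym: "u \<in> Vs \<Longrightarrow> v \<in> Vs \<Longrightarrow> a ((Ainv ^^ n) u) v = a u ((Ainv ^^ n) v)"
  by (induction n arbitrary: u) (auto simp: a_Ainv_sym funpow_swap1)

lemma dense_range_if_symmetric_injective: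
  assumes "linear E" and E_V: "\<And>c. c \<in> Vs \<Longrightarrow> E c \<in> Vs"
    and E_sym: "\<And>u v. u \<in> Vs \<Longrightarrow> v \<in> Vs \<Longrightarrow> a (E u) v = a u (E v)"
    and E_inj: "\<And>c. c \<in> Vs \<Longrightarrow> E c = 0 \<Longrightarrow> c = 0"
    and "g \<in> Vs" "0 < e"
  shows "\<exists>c\<in>Vs. a (E c - g) (E c - g) < e"
proof -
  have "subspace (E ` Vs)"
    using real_vector.linear_subspace_image[OF \<open>linear E\<close> subspace] .
  then obtain p where "p \<in> Vs" and p: "\<forall>r\<in>E ` Vs. a p r = a g r"
      and approx: "\<forall>e>0. \<exists>r\<in>E ` Vs. a (r - p) (r - p) < e"
    using exists_representer_in_closure[of "E ` Vs" "a g" "a g g"] E_V \<open>g \<in> Vs\<close> a_Cauchy_Schwarz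
    by fastforce
  define w where "w = p - g"
  have "w \<in> Vs" using \<open>p \<in> Vs\<close> \<open>g \<in> Vs\<close> by (simp add: w_def)
  have "a w (E (E w)) = 0"
    using p E_V[OF E_V[OF \<open>w \<in> Vs\<close>]] E_V \<open>w \<in> Vs\<close> \<open>p \<in> Vs\<close> \<open>g \<in> Vs\<close> by (simp add: w_def)
  then have "a (E w) (E w) = 0"
    using E_sym[OF \<open>w \<in> Vs\<close> E_V[OF \<open>w \<in> Vs\<close>]] by simp
  then have "w = 0"
    using E_inj \<open>w \<in> Vs\<close> E_V a_self_eq_0_iff by blast
  then show ?thesis
    using approx \<open>0 < e\<close> by (auto simp: w_def)
qed

lemma Hm1norm_bdd: "bdd_above {inner w v / sqrt (a v v) | v. v \<in> Vs \<and> v \<noteq> 0}"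
proof -
  obtain C where C: "\<And>v. v \<in> Vs \<Longrightarrow> norm v \<le> C * sqrt (a v v)"
    using norm_le_sqrt_a by blast
  have "inner w v / sqrt (a v v) \<le> norm w * C" if "v \<in> Vs" "v \<noteq> 0" for v
  proof -
    have "inner w v \<le> norm w * (C * sqrt (a v v))"
      using Cauchy_Schwarz_ineq2[of w v] C[OF that(1)]
      by (meson abs_le_D1 mult_left_mono norm_ge_zero order_trans)
    then show ?thesis
      using a_pos[OF that] by (simp add: divide_le_eq)
  qed
  then show ?thesis
    by (intro bdd_aboveI[of _ "norm w * C"]) auto
qed

lemma Hm1norm_ge: "v \<in> Vs \<Longrightarrow> v \<noteq> 0 \<Longrightarrow> inner w v / sqrt (a v v) \<le> Hm1norm Vs a w"
  unfolding Hm1norm_def by (rule cSup_upper[OF _ Hm1norm_bdd]) auto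

lemma Hm1norm_le: "(\<And>v. v \<in> Vs \<Longrightarrow> v \<noteq> 0 \<Longrightarrow> inner w v / sqrt (a v v) \<le> B) \<Longrightarrow> Hm1norm Vs a w \<le> B"
  unfolding Hm1norm_def using nontrivial subspace_0[OF subspace] by (intro cSup_least) auto

lemma Hm1norm_nonneg: "0 \<le> Hm1norm Vs a w"
proof -
  obtain v where "v \<in> Vs" "v \<noteq> 0"
    using nontrivial subspace_0[OF subspace] by blast
  then have "inner w v / sqrt (a v v) \<le> Hm1norm Vs a w" "- (inner w v / sqrt (a v v)) \<le> Hm1norm Vs a w"
    using Hm1norm_ge[of v w] Hm1norm_ge[of "- v" w] by auto
  then show ?thesis by linarith
qed

lemma Hm1norm_sq_ge: "u \<in> Vs \<Longrightarrow> 2 * inner w u - a u u \<le> (Hm1norm Vs a w)\<^sup>2"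
proof (cases "u = 0")
  case False
  assume "u \<in> Vs"
  have "0 < sqrt (a u u)"
    using a_pos[OF \<open>u \<in> Vs\<close> False] by simp
  then have "inner w u \<le> Hm1norm Vs a w * sqrt (a u u)"
    using Hm1norm_ge[OF \<open>u \<in> Vs\<close> False, of w] by (simp add: divide_le_eq)
  moreover have "0 \<le> (Hm1norm Vs a w - sqrt (a u u))\<^sup>2"
    by simp
  ultimately show ?thesis
    using a_nonneg[OF \<open>u \<in> Vs\<close>] by (simp add: power2_eq_square algebra_simps)
qed simp

lemma continuous_on_Hm1norm [continuous_intros]:
  assumes "continuous_on S f"
  shows "continuous_on S (\<lambda>s. Hm1norm Vs a (f s))"
proof -
  obtain C where "C > 0" and C: "\<And>v. v \<in> Vs \<Longrightarrow> norm v \<le> C * sqrt (a v v)"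
    using norm_le_sqrt_a by blast
  have Lip: "Hm1norm Vs a w1 \<le> Hm1norm Vs a w2 + C * norm (w1 - w2)" for w1 w2
  proof (rule Hm1norm_le)
    fix v assume v: "v \<in> Vs" "v \<noteq> 0"
    have "inner (w1 - w2) v \<le> norm (w1 - w2) * norm v"
      using Cauchy_Schwarz_ineq2[of "w1 - w2" v] by linarith
    also have "\<dots> \<le> norm (w1 - w2) * (C * sqrt (a v v))"
      using C[OF v(1)] by (intro mult_left_mono) auto
    finally have "inner (w1 - w2) v \<le> C * norm (w1 - w2) * sqrt (a v v)"
      by (simp add: ac_simps)
    then have "inner w1 v / sqrt (a v v) \<le> inner w2 v / sqrt (a v v) + C * norm (w1 - w2)"
      using a_pos[OF v] by (simp add: inner_diff_left divide_le_eq add_divide_distrib algebra_simps)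
    then show "inner w1 v / sqrt (a v v) \<le> Hm1norm Vs a w2 + C * norm (w1 - w2)"
      using Hm1norm_ge[OF v, of w2] by linarith
  qed
  have "C-lipschitz_on UNIV (Hm1norm Vs a)"
  proof (rule lipschitz_onI)
    fix x y :: 'h
    show "dist (Hm1norm Vs a x) (Hm1norm Vs a y) \<le> C * dist x y"
      using Lip[of x y] Lip[of y x]
      by (simp add: dist_real_def dist_norm norm_minus_commute abs_le_iff)
  qed (use \<open>C > 0\<close> in simp)
  then show ?thesis
    using continuous_on_compose2[OF lipschitz_on_continuous_on assms] by blast
qed

lemma Hm1norm_sq_le_if_represented:
  assumes "g \<in> Vs" and rep: "\<And>u. u \<in> Vs \<Longrightarrow> inner w u = a g u"
  shows "(Hm1norm Vs a w)\<^sup>2 \<le> a g g"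
proof -
  have "Hm1norm Vs a w \<le> sqrt (a g g)"
  proof (rule Hm1norm_le)
    fix v assume v: "v \<in> Vs" "v \<noteq> 0"
    have "a g v \<le> sqrt (a g g) * sqrt (a v v)"
      using a_Cauchy_Schwarz[OF \<open>g \<in> Vs\<close> v(1)]
      by (metis real_le_rsqrt real_sqrt_mult abs_le_D1 abs_le_square_iff real_sqrt_abs)
    then show "inner w v / sqrt (a v v) \<le> sqrt (a g g)"
      using rep[OF v(1)] a_pos[OF v] by (simp add: divide_le_eq)
  qed
  then show ?thesis
    using Hm1norm_nonneg[of w] \<open>g \<in> Vs\<close> by (metis a_nonneg power_mono real_sqrt_pow2)
qed

lemma pev_in_V [simp]: "(\<And>j. j \<le> d \<Longrightarrow> c j \<in> Vs) \<Longrightarrow> pev d c s \<in> Vs"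
  unfolding pev_def by (intro V_sum V_scale) auto

lemma a_pev_left: "(\<And>j. j \<le> d \<Longrightarrow> c j \<in> Vs) \<Longrightarrow> v \<in> Vs \<Longrightarrow> a (pev d c s) v = (\<Sum>j\<le>d. s ^ j * a (c j) v)"
  unfolding pev_def by (subst a_sum_left) auto

lemma a_pev_right: "(\<And>j. j \<le> d \<Longrightarrow> c j \<in> Vs) \<Longrightarrow> v \<in> Vs \<Longrightarrow> a v (pev d c s) = (\<Sum>j\<le>d. s ^ j * a v (c j))"
  unfolding pev_def by (subst a_sum_right) auto

lemma continuous_on_a_pev_const [continuous_intros]:
  "(\<And>j. j \<le> d \<Longrightarrow> c j \<in> Vs) \<Longrightarrow> v \<in> Vs \<Longrightarrow> continuous_on S (\<lambda>s. a (pev d c s) v)"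
  by (simp add: a_pev_left cong: continuous_on_cong) (intro continuous_intros)

lemma continuous_on_a_pev [continuous_intros]:
  assumes "\<And>j. j \<le> d \<Longrightarrow> c j \<in> Vs" and "\<And>j. j \<le> d' \<Longrightarrow> c' j \<in> Vs"
  shows "continuous_on S (\<lambda>s. a (pev d c s) (pev d' c' s))"
proof -
  have "a (pev d c s) (pev d' c' s) = (\<Sum>j\<le>d'. s ^ j * a (pev d c s) (c' j))" for s
    using assms by (simp add: a_pev_right)
  then show ?thesis
    using assms by (simp cong: continuous_on_cong) (intro continuous_intros; use assms in simp)
qed

lemma proj_coef_in_V [simp]: "(\<And>j. j \<le> Suc q \<Longrightarrow> x j \<in> Vs) \<Longrightarrow> j \<le> q \<Longrightarrow> proj_coef q L x j \<in> Vs"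
  unfolding proj_coef_def by simp

end

section \<open>One time interval\<close>

definition Bstar_piece :: "('h \<Rightarrow> 'h \<Rightarrow> real) \<Rightarrow> nat \<Rightarrow> real \<Rightarrow> real \<Rightarrow>
    (nat \<Rightarrow> 'h::real_inner) \<Rightarrow> (nat \<Rightarrow> 'h) \<Rightarrow> real" where
  "Bstar_piece a q lo hi y x = integral {lo..hi} (\<lambda>s.
     inner (pev q y s) (- pder (Suc q) x s) + a (pev q y s) (pev (Suc q) x s))"

definition Ynorm_piece :: "('h \<Rightarrow> 'h \<Rightarrow> real) \<Rightarrow> nat \<Rightarrow> real \<Rightarrow> real \<Rightarrow> (nat \<Rightarrow> 'h::real_vector) \<Rightarrow> real" where
  "Ynorm_piece a q lo hi y = integral {lo..hi} (\<lambda>s. a (pev q y s) (pev q y s))"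

definition Xnorm_piece :: "'h set \<Rightarrow> ('h \<Rightarrow> 'h \<Rightarrow> real) \<Rightarrow> nat \<Rightarrow> real \<Rightarrow> real \<Rightarrow>
    (nat \<Rightarrow> 'h::real_inner) \<Rightarrow> real" where
  "Xnorm_piece Vs a q lo hi x = integral {lo..hi} (\<lambda>s.
     (Hm1norm Vs a (pder (Suc q) x s))\<^sup>2 +
     a (proj_poly q lo hi (pev (Suc q) x) s) (proj_poly q lo hi (pev (Suc q) x) s))"

context energy_space
begin

lemma Ynorm_piece_nonneg: "(\<And>j. j \<le> q \<Longrightarrow> y j \<in> Vs) \<Longrightarrow> 0 \<le> Ynorm_piece a q lo hi y"
  unfolding Ynorm_piece_def
  by (cases "lo \<le> hi") (auto intro!: integral_nonneg integrable_continuous_interval continuous_intros)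

lemma Ynorm_piece_pos:
  assumes "lo < hi" and y: "\<And>j. j \<le> q \<Longrightarrow> y j \<in> Vs" and "j \<le> q" and "y j \<noteq> 0"
  shows "0 < Ynorm_piece a q lo hi y"
proof (rule ccontr)
  assume "\<not> 0 < Ynorm_piece a q lo hi y"
  then have "a (pev q y s) (pev q y s) = 0" if "s \<in> {lo..hi}" for s
    using y unfolding Ynorm_piece_def
    by (intro vanishes_if_integral_nonpos[OF _ \<open>lo < hi\<close> _ _ that]) (auto intro!: continuous_intros)
  then have "y j = 0"
    using y a_self_eq_0_iff pev_coeff_eq_0_if_vanishing[OF \<open>lo < hi\<close> _ \<open>j \<le> q\<close>] by (metis pev_in_V)
  with \<open>y j \<noteq> 0\<close> show False ..
qed

lemma Xnorm_piece_nonneg: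
  assumes "lo < hi" and x: "\<And>j. j \<le> Suc q \<Longrightarrow> x j \<in> Vs"
  shows "0 \<le> Xnorm_piece Vs a q lo hi x"
proof -
  obtain L where L: "monic_orthogonal q lo hi L"
    using exists_monic_orthogonal[OF \<open>lo < hi\<close>] by blast
  show ?thesis
    unfolding Xnorm_piece_def proj_poly_pev_Suc[OF \<open>lo < hi\<close> L] using x
    by (intro integral_nonneg integrable_continuous_interval continuous_intros) auto
qed

lemma Bstar_piece_eq:
  assumes L: "monic_orthogonal q lo hi L"
    and x: "\<And>j. j \<le> Suc q \<Longrightarrow> x j \<in> Vs" and y: "\<And>j. j \<le> q \<Longrightarrow> y j \<in> Vs"
  shows "Bstar_piece a q lo hi y x = integral {lo..hi} (\<lambda>s.
    a (pev q y s) (pev q (proj_coef q L x) s) - inner (pev q y s) (pder (Suc q) x s))"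
proof -
  have "(\<lambda>s. inner (pev q y s) (- pder (Suc q) x s) + a (pev q y s) (pev (Suc q) x s))
      = (\<lambda>s. (a (pev q y s) (pev q (proj_coef q L x) s) - inner (pev q y s) (pder (Suc q) x s))
        + poly L s * (\<Sum>j\<le>q. s ^ j * a (y j) (x (Suc q))))"
    using x y by (simp add: pev_Suc_decompose[OF L] a_pev_left sum_distrib_left algebra_simps)
  then show ?thesis
    unfolding Bstar_piece_def using x y
    by (simp only:) (intro integral_add_monic_orthogonal[OF L] continuous_intros; simp)
qed

lemma integral_inner_pder_proj:
  assumes "lo \<le> hi" and L: "monic_orthogonal q lo hi L"
  shows "integral {lo..hi} (\<lambda>s. inner (pder (Suc q) x s) (pev q (proj_coef q L x) s))
    = ((norm (pev (Suc q) x hi))\<^sup>2 - (norm (pev (Suc q) x lo))\<^sup>2) / 2"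
proof -
  have "inner (pder (Suc q) x s) (pev (Suc q) x s)
      = inner (pder (Suc q) x s) (pev q (proj_coef q L x) s)
        + poly L s * (\<Sum>j\<le>q. s ^ j * inner (real (Suc j) *\<^sub>R x (Suc j)) (x (Suc q)))" for s
    by (simp add: pev_Suc_decompose[OF L] inner_add_right pder_Suc_eq_pev inner_pev_left sum_distrib_left)
  then show ?thesis
    using integral_unique[OF has_integral_inner_pder_pev[OF assms(1), of "Suc q" x]]
    by (simp add: integral_add_monic_orthogonal[OF L] continuous_intros)
qed

lemma scaled_pairing_le_dual_norm:
  assumes "P \<in> Vs" "Y \<in> Vs"
  shows "2 * \<mu> * (a Y P - inner Y w) \<le> \<mu>\<^sup>2 * a Y Y + ((Hm1norm Vs a w)\<^sup>2 + a P P) - 2 * inner w P"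
proof -
  have "2 * inner w (1 *\<^sub>R P + (- \<mu>) *\<^sub>R Y) - a (1 *\<^sub>R P + (- \<mu>) *\<^sub>R Y) (1 *\<^sub>R P + (- \<mu>) *\<^sub>R Y)
      \<le> (Hm1norm Vs a w)\<^sup>2"
    using assms by (intro Hm1norm_sq_ge) simp
  then show ?thesis
    unfolding a_expand[OF assms] using a_sym[OF assms]
    by (simp add: inner_add_right inner_diff_right inner_commute[of Y w] algebra_simps)
qed

lemma Bstar_piece_upper:
  assumes "lo < hi" and x: "\<And>j. j \<le> Suc q \<Longrightarrow> x j \<in> Vs" and y: "\<And>j. j \<le> q \<Longrightarrow> y j \<in> Vs"
  shows "2 * \<mu> * Bstar_piece a q lo hi y x
    \<le> \<mu>\<^sup>2 * Ynorm_piece a q lo hi y + Xnorm_piece Vs a q lo hi x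
       - ((norm (pev (Suc q) x hi))\<^sup>2 - (norm (pev (Suc q) x lo))\<^sup>2)"
proof -
  obtain L where L: "monic_orthogonal q lo hi L"
    using exists_monic_orthogonal[OF assms(1)] by blast
  define P where "P = pev q (proj_coef q L x)"
  define Y where "Y = pev q y"
  define w where "w = pder (Suc q) x"
  have [simp]: "P s \<in> Vs" "Y s \<in> Vs" for s
    using x y by (simp_all add: P_def Y_def)
  have int: "(\<lambda>s. a (Y s) (P s)) integrable_on {lo..hi}" "(\<lambda>s. inner (Y s) (w s)) integrable_on {lo..hi}"
    "(\<lambda>s. a (Y s) (Y s)) integrable_on {lo..hi}" "(\<lambda>s. inner (w s) (P s)) integrable_on {lo..hi}"
    "(\<lambda>s. (Hm1norm Vs a (w s))\<^sup>2) integrable_on {lo..hi}" "(\<lambda>s. a (P s) (P s)) integrable_on {lo..hi}"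
    using x y unfolding P_def Y_def w_def
    by (auto intro!: integrable_continuous_interval continuous_intros)
  have B: "Bstar_piece a q lo hi y x
      = integral {lo..hi} (\<lambda>s. a (Y s) (P s)) - integral {lo..hi} (\<lambda>s. inner (Y s) (w s))"
    using Bstar_piece_eq[OF L x y] int by (simp add: P_def Y_def w_def integral_diff)
  have X: "Xnorm_piece Vs a q lo hi x = integral {lo..hi} (\<lambda>s. (Hm1norm Vs a (w s))\<^sup>2 + a (P s) (P s))"
    by (simp add: Xnorm_piece_def proj_poly_pev_Suc[OF \<open>lo < hi\<close> L] P_def w_def)
  have "integral {lo..hi} (\<lambda>s. 2 * \<mu> * (a (Y s) (P s) - inner (Y s) (w s)))
     \<le> integral {lo..hi} (\<lambda>s. \<mu>\<^sup>2 * a (Y s) (Y s) + ((Hm1norm Vs a (w s))\<^sup>2 + a (P s) (P s))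
          - 2 * inner (w s) (P s))"
    using int
    by (intro integral_le scaled_pairing_le_dual_norm integrable_on_mult_right integrable_diff
        integrable_add) auto
  moreover have "integral {lo..hi} (\<lambda>s. 2 * \<mu> * (a (Y s) (P s) - inner (Y s) (w s)))
      = 2 * \<mu> * Bstar_piece a q lo hi y x"
    using int by (simp add: B integral_diff)
  moreover have "integral {lo..hi} (\<lambda>s. \<mu>\<^sup>2 * a (Y s) (Y s) + ((Hm1norm Vs a (w s))\<^sup>2 + a (P s) (P s))
        - 2 * inner (w s) (P s))
      = \<mu>\<^sup>2 * Ynorm_piece a q lo hi y + Xnorm_piece Vs a q lo hi x
        - 2 * integral {lo..hi} (\<lambda>s. inner (w s) (P s))"
    using int
    by (simp add: X Ynorm_piece_def Y_def[symmetric] integral_diff integral_add integrable_diff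
        integrable_add integrable_on_mult_right)
  moreover have "integral {lo..hi} (\<lambda>s. inner (w s) (P s))
      = ((norm (pev (Suc q) x hi))\<^sup>2 - (norm (pev (Suc q) x lo))\<^sup>2) / 2"
    unfolding P_def w_def by (rule integral_inner_pder_proj[OF less_imp_le[OF \<open>lo < hi\<close>] L])
  ultimately show ?thesis
    by argo
qed

lemma Bstar_piece_of_solution:
  assumes L: "monic_orthogonal q lo hi L"
    and x: "\<And>j. j \<le> Suc q \<Longrightarrow> x j \<in> Vs" and y: "\<And>j. j \<le> q \<Longrightarrow> y j \<in> Vs"
    and yt: "\<And>j. j \<le> q \<Longrightarrow> yt j \<in> Vs"
    and weak: "\<And>s u. u \<in> Vs \<Longrightarrow> inner (pder (Suc q) x s) u = a (pev q (proj_coef q L x) s - pev q yt s) u"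
  shows "Bstar_piece a q lo hi y x = integral {lo..hi} (\<lambda>s. a (pev q y s) (pev q yt s))"
proof -
  have "a (pev q y s) (pev q (proj_coef q L x) s) - inner (pev q y s) (pder (Suc q) x s)
      = a (pev q y s) (pev q yt s)" for s
    using weak[of "pev q y s" s] x y yt a_sym[of "pev q y s" "pev q (proj_coef q L x) s"]
      a_sym[of "pev q y s" "pev q yt s"]
    by (simp add: inner_commute)
  then show ?thesis
    using Bstar_piece_eq[OF L x y] by simp
qed

lemma Xnorm_piece_of_solution:
  assumes "lo < hi" and L: "monic_orthogonal q lo hi L"
    and x: "\<And>j. j \<le> Suc q \<Longrightarrow> x j \<in> Vs" and yt: "\<And>j. j \<le> q \<Longrightarrow> yt j \<in> Vs"
    and weak: "\<And>s u. u \<in> Vs \<Longrightarrow> inner (pder (Suc q) x s) u = a (pev q (proj_coef q L x) s - pev q yt s) u"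
  shows "Xnorm_piece Vs a q lo hi x
    \<le> (norm (pev (Suc q) x hi))\<^sup>2 - (norm (pev (Suc q) x lo))\<^sup>2 + Ynorm_piece a q lo hi yt"
proof -
  define P where "P = pev q (proj_coef q L x)"
  define Yt where "Yt = pev q yt"
  define w where "w = pder (Suc q) x"
  have [simp]: "P s \<in> Vs" "Yt s \<in> Vs" for s
    using x yt by (simp_all add: P_def Yt_def)
  have "(Hm1norm Vs a (w s))\<^sup>2 + a (P s) (P s) \<le> 2 * inner (w s) (P s) + a (Yt s) (Yt s)" for s
  proof -
    have "(Hm1norm Vs a (w s))\<^sup>2 \<le> a (P s - Yt s) (P s - Yt s)"
      using weak by (intro Hm1norm_sq_le_if_represented) (simp_all add: P_def Yt_def w_def x yt)
    then show ?thesis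
      using weak[of "P s" s] a_sym[of "P s" "Yt s"]
      by (simp add: P_def[symmetric] Yt_def[symmetric] w_def[symmetric])
  qed
  then have "integral {lo..hi} (\<lambda>s. (Hm1norm Vs a (w s))\<^sup>2 + a (P s) (P s))
      \<le> integral {lo..hi} (\<lambda>s. 2 * inner (w s) (P s) + a (Yt s) (Yt s))"
    using x yt unfolding P_def Yt_def w_def
    by (intro integral_le) (auto intro!: integrable_continuous_interval continuous_intros)
  also have "\<dots> = 2 * integral {lo..hi} (\<lambda>s. inner (w s) (P s)) + Ynorm_piece a q lo hi yt"
    using x yt unfolding Ynorm_piece_def P_def Yt_def w_def
    by (subst integral_add) (auto intro!: integrable_continuous_interval continuous_intros)
  finally show ?thesis
    using integral_inner_pder_proj[OF less_imp_le[OF \<open>lo < hi\<close>] L, of x]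
    unfolding Xnorm_piece_def proj_poly_pev_Suc[OF \<open>lo < hi\<close> L] P_def w_def by argo
qed

text \<open>Back substitution for \<open>P\<^sub>m = g\<^sub>m + (m + 1) A\<^sup>-\<^sup>1 P\<^sub>m\<^sub>+\<^sub>1\<close> (\<open>m \<le> q\<close>, \<open>P\<^sub>q\<^sub>+\<^sub>1 = 0\<close>),
  the coefficient form of \<open>P = G + A\<^sup>-\<^sup>1 P'\<close> for polynomials of degree \<open>q\<close>.\<close>
definition backsolve :: "nat \<Rightarrow> (nat \<Rightarrow> 'h) \<Rightarrow> nat \<Rightarrow> 'h" where
  "backsolve q g m = (\<Sum>k\<in>{m..q}. (fact k / fact m) *\<^sub>R (Ainv ^^ (k - m)) (g k))"

lemma backsolve_in_V [simp]: "(\<And>j. j \<le> q \<Longrightarrow> g j \<in> Vs) \<Longrightarrow> backsolve q g m \<in> Vs"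
  unfolding backsolve_def by (intro V_sum V_scale Ainv_pow_in_V) auto

lemma backsolve_top [simp]: "backsolve q g (Suc q) = 0"
  by (simp add: backsolve_def)

lemma backsolve_rec:
  assumes "m \<le> q"
  shows "backsolve q g m = g m + real (Suc m) *\<^sub>R Ainv (backsolve q g (Suc m))"
proof -
  have "{m..q} = insert m {Suc m..q}"
    using assms by auto
  moreover have "real (Suc m) * (fact k / fact (Suc m)) = fact k / fact m" for k :: nat
    by (simp add: fact_Suc del: of_nat_Suc)
  moreover have "Ainv ((Ainv ^^ (k - Suc m)) v) = (Ainv ^^ (k - m)) v" if "Suc m \<le> k" for k v
    using that by (metis Suc_diff_le Suc_le_lessD diff_Suc_Suc funpow.simps(2) o_apply)
  ultimately show ?thesis
    unfolding backsolve_def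
    by (simp add: linear_sum[OF linear_Ainv] linear_scale[OF linear_Ainv] scaleR_sum_right)
qed

lemma backsolve_add: "backsolve q (\<lambda>j. f j + g j) = (\<lambda>m. backsolve q f m + backsolve q g m)"
  unfolding backsolve_def by (simp add: linear_add[OF linear_Ainv_pow] scaleR_add_right sum.distrib)

lemma backsolve_scale: "backsolve q (\<lambda>j. r *\<^sub>R g j) = (\<lambda>m. r *\<^sub>R backsolve q g m)"
  unfolding backsolve_def
  by (simp add: linear_scale[OF linear_Ainv_pow] scaleR_sum_right mult.commute)

lemma backsolve_zero: "backsolve q (\<lambda>_. 0) = (\<lambda>_. 0)"
  using backsolve_scale[of q 0 "\<lambda>_. 0"] by simp

lemma backsolve_const: "backsolve q (\<lambda>j. if j = 0 then d else 0) = (\<lambda>m. if m = 0 then d else 0)"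
  unfolding backsolve_def
  by (auto simp: fun_eq_iff linear_0[OF linear_Ainv_pow] if_distrib cong: if_cong)

lemma a_backsolve_Ainv_sym:
  assumes "c \<in> Vs" "v \<in> Vs"
  shows "a (backsolve q (\<lambda>j. \<beta> j *\<^sub>R Ainv c) m) v = a c (backsolve q (\<lambda>j. \<beta> j *\<^sub>R Ainv v) m)"
proof -
  have "a ((Ainv ^^ n) (Ainv c)) v = a c ((Ainv ^^ n) (Ainv v))" for n
    using a_Ainv_pow_sym[of c v "Suc n"] assms by (simp add: funpow_swap1)
  then show ?thesis
    using assms unfolding backsolve_def
    by (simp add: a_sum_left a_sum_right linear_scale[OF linear_Ainv_pow])
qed

text \<open>The discrete equation \<open>X' + A P X = A Y\<^sub>t\<close> on one interval, with prescribed top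
  coefficient \<open>c\<close>: writing \<open>X = P X + c L\<close>, it says \<open>P X = Y\<^sub>t + A\<^sup>-\<^sup>1 (P X)' + (A\<^sup>-\<^sup>1 c) L'\<close>.\<close>
definition piece_sol :: "nat \<Rightarrow> real poly \<Rightarrow> (nat \<Rightarrow> 'h) \<Rightarrow> 'h \<Rightarrow> nat \<Rightarrow> 'h" where
  "piece_sol q L yt c j = backsolve q (\<lambda>k. yt k + coeff (pderiv L) k *\<^sub>R Ainv c) j + coeff L j *\<^sub>R c"

lemma piece_sol_top: "monic_orthogonal q lo hi L \<Longrightarrow> piece_sol q L yt c (Suc q) = c"
  by (simp add: piece_sol_def monic_orthogonal_def)

lemma piece_sol_in_V:
  "(\<And>j. j \<le> q \<Longrightarrow> yt j \<in> Vs) \<Longrightarrow> c \<in> Vs \<Longrightarrow> piece_sol q L yt c j \<in> Vs"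
  by (simp add: piece_sol_def)

lemma proj_coef_piece_sol:
  "monic_orthogonal q lo hi L \<Longrightarrow>
    proj_coef q L (piece_sol q L yt c) = backsolve q (\<lambda>k. yt k + coeff (pderiv L) k *\<^sub>R Ainv c)"
  by (simp add: proj_coef_def piece_sol_top fun_eq_iff) (simp add: piece_sol_def)

lemma piece_sol_weak:
  assumes L: "monic_orthogonal q lo hi L" and yt: "\<And>j. j \<le> q \<Longrightarrow> yt j \<in> Vs" and "c \<in> Vs" "u \<in> Vs"
  shows "inner (pder (Suc q) (piece_sol q L yt c) s) u
    = a (pev q (proj_coef q L (piece_sol q L yt c)) s - pev q yt s) u"
proof -
  define g where "g = (\<lambda>k. yt k + coeff (pderiv L) k *\<^sub>R Ainv c)"
  have g: "g j \<in> Vs" if "j \<le> q" for j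
    using yt that \<open>c \<in> Vs\<close> by (simp add: g_def)
  have sol: "piece_sol q L yt c j = backsolve q g j + coeff L j *\<^sub>R c" for j
    by (simp add: piece_sol_def g_def)
  have "Ainv (real (Suc j) *\<^sub>R piece_sol q L yt c (Suc j)) = backsolve q g j - yt j" if "j \<le> q" for j
    using backsolve_rec[OF that, of g]
    by (simp add: sol linear_add[OF linear_Ainv] linear_scale[OF linear_Ainv] coeff_pderiv
        scaleR_add_right g_def)
  then have "inner (real (Suc j) *\<^sub>R piece_sol q L yt c (Suc j)) u = a (backsolve q g j - yt j) u"
    if "j \<le> q" for j
    using a_Ainv[OF \<open>u \<in> Vs\<close>, of "real (Suc j) *\<^sub>R piece_sol q L yt c (Suc j)"] that by (simp only:)
  then have "inner (pder (Suc q) (piece_sol q L yt c) s) u = (\<Sum>j\<le>q. s ^ j * a (backsolve q g j - yt j) u)"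
    unfolding pder_Suc_eq_pev inner_pev_left by (intro sum.cong) auto
  also have "\<dots> = a (pev q (backsolve q g) s - pev q yt s) u"
    using \<open>u \<in> Vs\<close> g yt by (simp add: a_pev_left pev_diff[symmetric])
  finally show ?thesis
    by (simp add: proj_coef_piece_sol[OF L] g_def[symmetric])
qed

text \<open>The end value of \<open>piece_sol\<close> with zero data, as a function of the top coefficient; it is
  a polynomial in \<open>A\<^sup>-\<^sup>1\<close>, hence \<open>a\<close>-symmetric.\<close>
definition end_map :: "nat \<Rightarrow> real poly \<Rightarrow> real \<Rightarrow> 'h \<Rightarrow> 'h" where
  "end_map q L t c = pev q (backsolve q (\<lambda>k. coeff (pderiv L) k *\<^sub>R Ainv c)) t + poly L t *\<^sub>R c"

lemma pev_piece_sol: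
  assumes "monic_orthogonal q lo hi L"
  shows "pev (Suc q) (piece_sol q L yt c) t = pev q (backsolve q yt) t + end_map q L t c"
  using pev_Suc_decompose[OF assms, of "piece_sol q L yt c" t]
  by (simp add: proj_coef_piece_sol[OF assms] piece_sol_top[OF assms] backsolve_add pev_add end_map_def)

lemma end_map_in_V [simp]: "c \<in> Vs \<Longrightarrow> end_map q L t c \<in> Vs"
  by (simp add: end_map_def)

lemma linear_end_map: "linear (end_map q L t)"
proof (rule linearI)
  show "end_map q L t (c1 + c2) = end_map q L t c1 + end_map q L t c2" for c1 c2
    by (simp add: end_map_def linear_add[OF linear_Ainv] scaleR_add_right backsolve_add pev_add)
  show "end_map q L t (r *\<^sub>R c) = r *\<^sub>R end_map q L t c" for r c
    using backsolve_scale[of q r "\<lambda>k. coeff (pderiv L) k *\<^sub>R Ainv c"]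
    by (simp add: end_map_def linear_scale[OF linear_Ainv] pev_scale scaleR_add_right mult.commute)
qed

lemma a_end_map_sym: "c \<in> Vs \<Longrightarrow> v \<in> Vs \<Longrightarrow> a (end_map q L t c) v = a c (end_map q L t v)"
  by (simp add: end_map_def a_pev_left a_pev_right a_backsolve_Ainv_sym a_sym[of c])

lemma end_map_eq_0_imp:
  assumes "lo < hi" and L: "monic_orthogonal q lo hi L" and "c \<in> Vs" and "end_map q L hi c = 0"
  shows "c = 0"
proof -
  define x where "x = piece_sol q L (\<lambda>_. 0) c"
  define P where "P = pev q (proj_coef q L x)"
  have x: "x j \<in> Vs" for j
    using \<open>c \<in> Vs\<close> by (simp add: x_def piece_sol_in_V)
  have "pev (Suc q) x hi = 0"
    unfolding x_def pev_piece_sol[OF L] backsolve_zero assms(4) by simp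
  moreover have "inner (pder (Suc q) x s) u = a (pev q (proj_coef q L x) s - pev q (\<lambda>_. 0) s) u"
    if "u \<in> Vs" for s u
    unfolding x_def using piece_sol_weak[OF L _ \<open>c \<in> Vs\<close> that] by simp
  then have "Xnorm_piece Vs a q lo hi x
      \<le> (norm (pev (Suc q) x hi))\<^sup>2 - (norm (pev (Suc q) x lo))\<^sup>2 + Ynorm_piece a q lo hi (\<lambda>_. 0)"
    by (intro Xnorm_piece_of_solution[OF \<open>lo < hi\<close> L x]) auto
  ultimately have "Xnorm_piece Vs a q lo hi x \<le> - (norm (pev (Suc q) x lo))\<^sup>2"
    by (simp add: Ynorm_piece_def)
  then have "integral {lo..hi} (\<lambda>s. (Hm1norm Vs a (pder (Suc q) x s))\<^sup>2 + a (P s) (P s)) \<le> 0"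
    unfolding Xnorm_piece_def proj_poly_pev_Suc[OF \<open>lo < hi\<close> L] P_def
    using zero_le_power2[of "norm (pev (Suc q) x lo)"] by linarith
  then have "(Hm1norm Vs a (pder (Suc q) x s))\<^sup>2 + a (P s) (P s) = 0" if "s \<in> {lo..hi}" for s
    using x unfolding P_def
    by (intro vanishes_if_integral_nonpos[OF _ \<open>lo < hi\<close> _ _ that]) (auto intro!: continuous_intros)
  then have "P s = 0" if "s \<in> {lo..hi}" for s
    using that x a_self_eq_0_iff[of "P s"] by (simp add: P_def add_nonneg_eq_0_iff)
  then have "proj_coef q L x q = 0"
    using pev_coeff_eq_0_if_vanishing[OF \<open>lo < hi\<close>, of q "proj_coef q L x" q] by (simp add: P_def)
  moreover have "coeff (pderiv L) q = real (Suc q)"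
    using L by (simp add: coeff_pderiv monic_orthogonal_def)
  ultimately have "Ainv c = 0"
    using backsolve_rec[of q q] linear_0[OF linear_Ainv]
    by (simp add: x_def proj_coef_piece_sol[OF L])
  then show ?thesis
    using Ainv_eq_0_imp[OF \<open>c \<in> Vs\<close>] by simp
qed

text \<open>Since \<open>end_map\<close> is only known to have dense range, the prescribed end value \<open>z\<close> is met
  exactly by moving the remaining defect \<open>d\<close> into the data.\<close>
lemma exists_piece_solution_with_defect:
  assumes "lo < hi" and y: "\<And>j. j \<le> q \<Longrightarrow> y j \<in> Vs" and "z \<in> Vs" and "0 < \<delta>"
  shows "\<exists>x d. (\<forall>j\<le>Suc q. x j \<in> Vs) \<and> d \<in> Vs \<and> a d d < \<delta> \<and> pev (Suc q) x hi = z \<and>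
    Bstar_piece a q lo hi y x = integral {lo..hi} (\<lambda>s. a (pev q y s) (pev q y s + d)) \<and>
    Xnorm_piece Vs a q lo hi x \<le> (norm z)\<^sup>2 - (norm (pev (Suc q) x lo))\<^sup>2
      + integral {lo..hi} (\<lambda>s. a (pev q y s + d) (pev q y s + d))"
proof -
  obtain L where L: "monic_orthogonal q lo hi L"
    using exists_monic_orthogonal[OF \<open>lo < hi\<close>] by blast
  define g where "g = z - pev q (backsolve q y) hi"
  have "g \<in> Vs"
    using \<open>z \<in> Vs\<close> y by (simp add: g_def)
  obtain c where "c \<in> Vs" and c: "a (end_map q L hi c - g) (end_map q L hi c - g) < \<delta>"
    using dense_range_if_symmetric_injective[of "end_map q L hi" g \<delta>] linear_end_map end_map_in_V
      a_end_map_sym end_map_eq_0_imp[OF \<open>lo < hi\<close> L] \<open>g \<in> Vs\<close> \<open>0 < \<delta>\<close> by blast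
  define d where "d = g - end_map q L hi c"
  define yt where "yt = (\<lambda>j. y j + (if j = 0 then d else 0))"
  define x where "x = piece_sol q L yt c"
  have "d \<in> Vs" and yt: "\<And>j. j \<le> q \<Longrightarrow> yt j \<in> Vs" and x: "\<And>j. x j \<in> Vs"
    using \<open>g \<in> Vs\<close> \<open>c \<in> Vs\<close> y by (simp_all add: d_def yt_def x_def piece_sol_in_V)
  have "a d d < \<delta>"
    using c \<open>g \<in> Vs\<close> \<open>c \<in> Vs\<close> a_minus_left[of "end_map q L hi c - g"] by (simp add: d_def)
  have pev_yt: "pev q yt s = pev q y s + d" for s
    by (simp add: yt_def pev_add pev_const)
  have "pev (Suc q) x hi = z"
    by (simp add: x_def pev_piece_sol[OF L] yt_def backsolve_add backsolve_const pev_add pev_const d_def g_def)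
  moreover have weak: "inner (pder (Suc q) x s) u = a (pev q (proj_coef q L x) s - pev q yt s) u"
    if "u \<in> Vs" for s u
    unfolding x_def using piece_sol_weak[OF L yt \<open>c \<in> Vs\<close> that] .
  ultimately show ?thesis
    using Bstar_piece_of_solution[OF L x y yt weak] Xnorm_piece_of_solution[OF \<open>lo < hi\<close> L x yt weak]
      x \<open>d \<in> Vs\<close> \<open>a d d < \<delta>\<close>
    by (intro exI[of _ x] exI[of _ d]) (simp add: pev_yt Ynorm_piece_def)
qed

lemma integral_a_perturbation_lower:
  assumes "lo \<le> hi" and y: "\<And>j. j \<le> q \<Longrightarrow> y j \<in> Vs" and "d \<in> Vs" and "0 < \<theta>"
  shows "(1 - \<theta> / 2) * Ynorm_piece a q lo hi y - (hi - lo) * ((1 + 1 / \<theta>) * a d d)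
      \<le> integral {lo..hi} (\<lambda>s. a (pev q y s) (pev q y s + d))"
proof -
  define Y where "Y = pev q y"
  have [simp]: "Y s \<in> Vs" for s
    using y by (simp add: Y_def)
  have "a d d / \<theta> \<le> 2 * ((1 + 1 / \<theta>) * a d d)"
    using \<open>0 < \<theta>\<close> a_nonneg[OF \<open>d \<in> Vs\<close>] by (simp add: field_simps)
  then have "(1 - \<theta> / 2) * a (Y s) (Y s) - (1 + 1 / \<theta>) * a d d \<le> a (Y s) (Y s) + a (Y s) d" for s
    using two_abs_a_le[of "Y s" d \<theta>] \<open>d \<in> Vs\<close> \<open>0 < \<theta>\<close> by (simp add: algebra_simps abs_le_iff)
  then have "integral {lo..hi} (\<lambda>s. (1 - \<theta> / 2) * a (Y s) (Y s) - (1 + 1 / \<theta>) * a d d)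
      \<le> integral {lo..hi} (\<lambda>s. a (Y s) (Y s) + a (Y s) d)"
    using y \<open>d \<in> Vs\<close> unfolding Y_def
    by (intro integral_le) (auto intro!: integrable_continuous_interval continuous_intros)
  moreover have "integral {lo..hi} (\<lambda>s. (1 - \<theta> / 2) * a (Y s) (Y s) - (1 + 1 / \<theta>) * a d d)
      = (1 - \<theta> / 2) * Ynorm_piece a q lo hi y - (hi - lo) * ((1 + 1 / \<theta>) * a d d)"
    using y \<open>lo \<le> hi\<close> unfolding Ynorm_piece_def Y_def
    by (subst integral_diff)
      (auto intro!: integrable_on_mult_right integrable_continuous_interval continuous_intros)
  moreover have "a (Y s) (Y s + d) = a (Y s) (Y s) + a (Y s) d" for s
    using \<open>d \<in> Vs\<close> by simp
  ultimately show ?thesis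
    by (simp add: Y_def)
qed

lemma integral_a_perturbation_upper:
  assumes "lo \<le> hi" and y: "\<And>j. j \<le> q \<Longrightarrow> y j \<in> Vs" and "d \<in> Vs" and "0 < \<theta>"
  shows "integral {lo..hi} (\<lambda>s. a (pev q y s + d) (pev q y s + d))
      \<le> (1 + \<theta>) * Ynorm_piece a q lo hi y + (hi - lo) * ((1 + 1 / \<theta>) * a d d)"
proof -
  define Y where "Y = pev q y"
  have [simp]: "Y s \<in> Vs" for s
    using y by (simp add: Y_def)
  have "a (Y s) (Y s) + 2 * a (Y s) d + a d d \<le> (1 + \<theta>) * a (Y s) (Y s) + (1 + 1 / \<theta>) * a d d" for s
    using two_abs_a_le[of "Y s" d \<theta>] \<open>d \<in> Vs\<close> \<open>0 < \<theta>\<close> by (simp add: algebra_simps abs_le_iff)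
  then have "integral {lo..hi} (\<lambda>s. a (Y s) (Y s) + 2 * a (Y s) d + a d d)
      \<le> integral {lo..hi} (\<lambda>s. (1 + \<theta>) * a (Y s) (Y s) + (1 + 1 / \<theta>) * a d d)"
    using y \<open>d \<in> Vs\<close> unfolding Y_def
    by (intro integral_le) (auto intro!: integrable_continuous_interval continuous_intros)
  moreover have "integral {lo..hi} (\<lambda>s. (1 + \<theta>) * a (Y s) (Y s) + (1 + 1 / \<theta>) * a d d)
      = (1 + \<theta>) * Ynorm_piece a q lo hi y + (hi - lo) * ((1 + 1 / \<theta>) * a d d)"
    using y \<open>lo \<le> hi\<close> unfolding Ynorm_piece_def Y_def
    by (subst integral_add)
      (auto intro!: integrable_on_mult_right integrable_continuous_interval continuous_intros)
  moreover have "a (Y s + d) (Y s + d) = a (Y s) (Y s) + 2 * a (Y s) d + a d d" for s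
    using \<open>d \<in> Vs\<close> a_sym[of d "Y s"] by simp
  ultimately show ?thesis
    by (simp add: Y_def)
qed

lemma exists_piece_solution:
  assumes "lo < hi" and y: "\<And>j. j \<le> q \<Longrightarrow> y j \<in> Vs" and "z \<in> Vs" and "0 < \<theta>" and "0 < \<eta>"
  shows "\<exists>x. (\<forall>j\<le>Suc q. x j \<in> Vs) \<and> pev (Suc q) x hi = z \<and>
    (1 - \<theta> / 2) * Ynorm_piece a q lo hi y - \<eta> \<le> Bstar_piece a q lo hi y x \<and>
    Xnorm_piece Vs a q lo hi x
      \<le> (norm z)\<^sup>2 - (norm (pev (Suc q) x lo))\<^sup>2 + (1 + \<theta>) * Ynorm_piece a q lo hi y + \<eta>"
proof -
  define \<kappa> where "\<kappa> = (hi - lo) * (1 + 1 / \<theta>)"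
  have "0 < \<kappa>"
    using \<open>lo < hi\<close> \<open>0 < \<theta>\<close> by (simp add: \<kappa>_def add_pos_pos)
  then obtain x d where x: "\<forall>j\<le>Suc q. x j \<in> Vs" "pev (Suc q) x hi = z" and "d \<in> Vs" "a d d < \<eta> / \<kappa>"
    and B: "Bstar_piece a q lo hi y x = integral {lo..hi} (\<lambda>s. a (pev q y s) (pev q y s + d))"
    and X: "Xnorm_piece Vs a q lo hi x \<le> (norm z)\<^sup>2 - (norm (pev (Suc q) x lo))\<^sup>2
      + integral {lo..hi} (\<lambda>s. a (pev q y s + d) (pev q y s + d))"
    using exists_piece_solution_with_defect[where q = q and y = y and \<delta> = "\<eta> / \<kappa>",
        OF \<open>lo < hi\<close> y \<open>z \<in> Vs\<close>] \<open>0 < \<eta>\<close>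
    by auto
  have "(hi - lo) * ((1 + 1 / \<theta>) * a d d) \<le> \<eta>"
    using \<open>a d d < \<eta> / \<kappa>\<close> \<open>0 < \<kappa>\<close> by (simp add: \<kappa>_def field_simps)
  then show ?thesis
    using integral_a_perturbation_lower[where q = q and y = y, OF less_imp_le[OF \<open>lo < hi\<close>] y
        \<open>d \<in> Vs\<close> \<open>0 < \<theta>\<close>]
      integral_a_perturbation_upper[where q = q and y = y, OF less_imp_le[OF \<open>lo < hi\<close>] y
        \<open>d \<in> Vs\<close> \<open>0 < \<theta>\<close>]
      x B X
    by (intro exI[of _ x]) auto
qed

end

section \<open>The semidiscrete spaces\<close>

lemma Bstar_eq_sum: "Bstar a N t q Y x =
    (\<Sum>i<N. Bstar_piece a q (t i) (t (Suc i)) (fst Y i) (x i))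
    + inner (snd Y) (pev (Suc q) (x (N - 1)) (t N))"
  by (simp add: Bstar_def Bstar_piece_def)

lemma Ynorm_sq_eq_sum:
  "Ynorm_sq a N t q Y = (norm (snd Y))\<^sup>2 + (\<Sum>i<N. Ynorm_piece a q (t i) (t (Suc i)) (fst Y i))"
  by (simp add: Ynorm_sq_def Ynorm_piece_def)

lemma Xnorm_sq_eq_sum: "Xnorm_sq Vs a N t q x =
    (norm (pev (Suc q) (x 0) (t 0)))\<^sup>2 + (\<Sum>i<N. Xnorm_piece Vs a q (t i) (t (Suc i)) (x i))"
  by (simp add: Xnorm_sq_def Xnorm_piece_def)

lemma sum_end_values_telescope:
  assumes "x \<in> Xcoef Vs N t q" and "1 \<le> N"
  shows "(\<Sum>i<N. (norm (pev (Suc q) (x i) (t (Suc i))))\<^sup>2 - (norm (pev (Suc q) (x i) (t i)))\<^sup>2)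
    = (norm (pev (Suc q) (x (N - 1)) (t N)))\<^sup>2 - (norm (pev (Suc q) (x 0) (t 0)))\<^sup>2"
proof -
  define f where "f i = (norm (pev (Suc q) (x (min i (N - 1))) (t i)))\<^sup>2" for i
  have "(norm (pev (Suc q) (x i) (t (Suc i))))\<^sup>2 - (norm (pev (Suc q) (x i) (t i)))\<^sup>2 = f (Suc i) - f i"
    if "i < N" for i
  proof (cases "Suc i < N")
    case True
    then show ?thesis
      using assms(1) by (auto simp: f_def Xcoef_def min_def)
  next
    case False
    then have "i = N - 1" using that by linarith
    then show ?thesis by (simp add: f_def)
  qed
  then show ?thesis
    using sum_lessThan_telescope[of f N] \<open>1 \<le> N\<close> by (simp add: f_def)
qed

locale semidiscrete = energy_space Vs a
  for Vs :: "'h::real_inner set" and a +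
  fixes N q :: nat and t :: "nat \<Rightarrow> real"
  assumes N_pos: "1 \<le> N" and t_strict: "\<And>i. i < N \<Longrightarrow> t i < t (Suc i)"

context semidiscrete
begin

lemma Ynorm_sq_nonneg: "fst Y \<in> Ycoef Vs N q \<Longrightarrow> 0 \<le> Ynorm_sq a N t q Y"
  unfolding Ynorm_sq_eq_sum Ycoef_def
  by (intro add_nonneg_nonneg sum_nonneg Ynorm_piece_nonneg) auto

lemma Xnorm_sq_nonneg: "x \<in> Xcoef Vs N t q \<Longrightarrow> 0 \<le> Xnorm_sq Vs a N t q x"
  unfolding Xnorm_sq_eq_sum Xcoef_def
  by (intro add_nonneg_nonneg sum_nonneg Xnorm_piece_nonneg t_strict) auto

lemma Ynorm_sq_pos:
  assumes "fst Y \<in> Ycoef Vs N q" and "(\<exists>i<N. \<exists>j\<le>q. fst Y i j \<noteq> 0) \<or> snd Y \<noteq> 0"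
  shows "0 < Ynorm_sq a N t q Y"
proof -
  have nonneg: "0 \<le> Ynorm_piece a q (t i) (t (Suc i)) (fst Y i)" if "i < N" for i
    using assms(1) that by (intro Ynorm_piece_nonneg) (auto simp: Ycoef_def)
  show ?thesis
    using assms(2)
  proof
    assume "\<exists>i<N. \<exists>j\<le>q. fst Y i j \<noteq> 0"
    then obtain i j where "i < N" "j \<le> q" "fst Y i j \<noteq> 0" by blast
    then have "0 < Ynorm_piece a q (t i) (t (Suc i)) (fst Y i)"
      using assms(1) t_strict by (intro Ynorm_piece_pos) (auto simp: Ycoef_def)
    moreover have "Ynorm_piece a q (t i) (t (Suc i)) (fst Y i)
        \<le> (\<Sum>i<N. Ynorm_piece a q (t i) (t (Suc i)) (fst Y i))"
      using nonneg \<open>i < N\<close> by (intro member_le_sum) auto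
    ultimately show ?thesis
      unfolding Ynorm_sq_eq_sum using zero_le_power2[of "norm (snd Y)"] by linarith
  next
    assume "snd Y \<noteq> 0"
    moreover have "0 \<le> (\<Sum>i<N. Ynorm_piece a q (t i) (t (Suc i)) (fst Y i))"
      using nonneg by (intro sum_nonneg) simp
    ultimately show ?thesis
      unfolding Ynorm_sq_eq_sum by (simp add: add_pos_nonneg)
  qed
qed

lemma Bstar_le_norms:
  assumes Y: "fst Y \<in> Ycoef Vs N q" and x: "x \<in> Xcoef Vs N t q"
  shows "Bstar a N t q Y x \<le> sqrt (Ynorm_sq a N t q Y) * sqrt (Xnorm_sq Vs a N t q x)"
proof (rule le_sqrt_mult_sqrt_if_scaled_AM_GM[OF _ Ynorm_sq_nonneg[OF Y] Xnorm_sq_nonneg[OF x]])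
  fix \<mu> :: real
  define XT where "XT = pev (Suc q) (x (N - 1)) (t N)"
  have "2 * \<mu> * (\<Sum>i<N. Bstar_piece a q (t i) (t (Suc i)) (fst Y i) (x i))
      \<le> (\<Sum>i<N. \<mu>\<^sup>2 * Ynorm_piece a q (t i) (t (Suc i)) (fst Y i) + Xnorm_piece Vs a q (t i) (t (Suc i)) (x i)
           - ((norm (pev (Suc q) (x i) (t (Suc i))))\<^sup>2 - (norm (pev (Suc q) (x i) (t i)))\<^sup>2))"
    unfolding sum_distrib_left using Y x t_strict
    by (intro sum_mono Bstar_piece_upper) (auto simp: Ycoef_def Xcoef_def)
  also have "\<dots> = \<mu>\<^sup>2 * (\<Sum>i<N. Ynorm_piece a q (t i) (t (Suc i)) (fst Y i))
      + (\<Sum>i<N. Xnorm_piece Vs a q (t i) (t (Suc i)) (x i))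
      - ((norm XT)\<^sup>2 - (norm (pev (Suc q) (x 0) (t 0)))\<^sup>2)"
    unfolding XT_def sum_end_values_telescope[OF x N_pos, symmetric] sum_subtractf sum.distrib
      sum_distrib_left ..
  finally have "2 * \<mu> * (\<Sum>i<N. Bstar_piece a q (t i) (t (Suc i)) (fst Y i) (x i)) \<le> \<dots>" .
  moreover have "2 * \<mu> * inner (snd Y) XT \<le> \<mu>\<^sup>2 * (norm (snd Y))\<^sup>2 + (norm XT)\<^sup>2"
  proof -
    have "0 \<le> inner (\<mu> *\<^sub>R snd Y - XT) (\<mu> *\<^sub>R snd Y - XT)"
      by simp
    also have "\<dots> = \<mu>\<^sup>2 * inner (snd Y) (snd Y) - 2 * \<mu> * inner (snd Y) XT + inner XT XT"
      by (simp add: inner_diff_left inner_diff_right inner_commute[of XT "snd Y"] power2_eq_square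
          algebra_simps)
    finally show ?thesis
      by (simp add: power2_norm_eq_inner)
  qed
  ultimately show "2 * \<mu> * Bstar a N t q Y x \<le> \<mu>\<^sup>2 * Ynorm_sq a N t q Y + Xnorm_sq Vs a N t q x"
    unfolding Bstar_eq_sum Ynorm_sq_eq_sum Xnorm_sq_eq_sum XT_def[symmetric] distrib_left
    by linarith
qed

lemma Bstar_ratio_le_1:
  assumes "fst Y \<in> Ycoef Vs N q" and "x \<in> Xcoef Vs N t q"
  shows "Bstar a N t q Y x / (sqrt (Ynorm_sq a N t q Y) * sqrt (Xnorm_sq Vs a N t q x)) \<le> 1"
  using Bstar_le_norms[OF assms] Ynorm_sq_nonneg[OF assms(1)] Xnorm_sq_nonneg[OF assms(2)]
  by (cases "sqrt (Ynorm_sq a N t q Y) * sqrt (Xnorm_sq Vs a N t q x) = 0") (auto simp: divide_le_eq_1)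

lemma Bstar_eq_0_if_X_coeffs_0:
  assumes "fst Y \<in> Ycoef Vs N q" and "\<forall>i<N. \<forall>j\<le>q + 1. x i j = 0"
  shows "Bstar a N t q Y x = 0"
proof -
  have "pev (Suc q) (x i) s = 0" "pder (Suc q) (x i) s = 0" if "i < N" for i s
    using assms(2) that by (simp_all add: pev_def pder_def)
  moreover have "pev q (fst Y i) s \<in> Vs" if "i < N" for i s
    using assms(1) that by (simp add: Ycoef_def)
  ultimately show ?thesis
    using N_pos by (simp add: Bstar_eq_sum Bstar_piece_def)
qed

text \<open>Pieces are chosen from right to left, each ending at the starting value of its right
  neighbour.\<close>
lemma exists_continuous_chain:
  assumes step: "\<And>i w. i < N \<Longrightarrow> w \<in> Vs \<Longrightarrow>
      \<exists>xi. (\<forall>j\<le>Suc q. xi j \<in> Vs) \<and> pev (Suc q) xi (t (Suc i)) = w \<and> P i xi"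
    and "z \<in> Vs"
  shows "\<exists>x\<in>Xcoef Vs N t q. pev (Suc q) (x (N - 1)) (t N) = z \<and> (\<forall>i<N. P i (x i))"
proof -
  obtain sol where sol: "\<And>i w. i < N \<Longrightarrow> w \<in> Vs \<Longrightarrow>
      (\<forall>j\<le>Suc q. sol i w j \<in> Vs) \<and> pev (Suc q) (sol i w) (t (Suc i)) = w \<and> P i (sol i w)"
    using step by metis
  define w where "w = rec_nat z (\<lambda>k v. pev (Suc q) (sol (N - Suc k) v) (t (N - Suc k)))"
  have w_Suc: "w (Suc k) = pev (Suc q) (sol (N - Suc k) (w k)) (t (N - Suc k))" for k
    by (simp add: w_def)
  have w_V: "w k \<in> Vs" for k
    by (induction k) (use \<open>z \<in> Vs\<close> N_pos sol in \<open>auto simp: w_def\<close>)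
  define x where "x i = sol i (w (N - Suc i))" for i
  have x: "(\<forall>j\<le>Suc q. x i j \<in> Vs) \<and> pev (Suc q) (x i) (t (Suc i)) = w (N - Suc i) \<and> P i (x i)"
    if "i < N" for i
    using sol[OF that w_V] by (simp add: x_def)
  have x_start: "pev (Suc q) (x i) (t i) = w (N - i)" if "i < N" for i
  proof -
    have "N - i = Suc (N - Suc i)" "N - Suc (N - Suc i) = i"
      using that by auto
    then show ?thesis
      using w_Suc[of "N - Suc i"] by (simp add: x_def)
  qed
  have "x \<in> Xcoef Vs N t q"
    using x x_start unfolding Xcoef_def by (auto simp: Suc_diff_Suc)
  moreover have "pev (Suc q) (x (N - 1)) (t N) = z"
    using x[of "N - 1"] N_pos by (simp add: w_def)
  ultimately show ?thesis
    using x by blast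
qed

lemma exists_backward_sweep:
  assumes Y: "fst Y \<in> Ycoef Vs N q" and "z \<in> Vs" and "0 < \<theta>" and "0 < \<eta>"
  shows "\<exists>x\<in>Xcoef Vs N t q. pev (Suc q) (x (N - 1)) (t N) = z \<and>
    (1 - \<theta> / 2) * (\<Sum>i<N. Ynorm_piece a q (t i) (t (Suc i)) (fst Y i)) - real N * \<eta>
      \<le> (\<Sum>i<N. Bstar_piece a q (t i) (t (Suc i)) (fst Y i) (x i)) \<and>
    (\<Sum>i<N. Xnorm_piece Vs a q (t i) (t (Suc i)) (x i))
      \<le> (norm z)\<^sup>2 - (norm (pev (Suc q) (x 0) (t 0)))\<^sup>2
         + (1 + \<theta>) * (\<Sum>i<N. Ynorm_piece a q (t i) (t (Suc i)) (fst Y i)) + real N * \<eta>"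
proof -
  define P where "P i xi \<longleftrightarrow>
    (1 - \<theta> / 2) * Ynorm_piece a q (t i) (t (Suc i)) (fst Y i) - \<eta>
      \<le> Bstar_piece a q (t i) (t (Suc i)) (fst Y i) xi \<and>
    Xnorm_piece Vs a q (t i) (t (Suc i)) xi \<le> (norm (pev (Suc q) xi (t (Suc i))))\<^sup>2
      - (norm (pev (Suc q) xi (t i)))\<^sup>2 + (1 + \<theta>) * Ynorm_piece a q (t i) (t (Suc i)) (fst Y i) + \<eta>" for i xi
  have "\<exists>xi. (\<forall>j\<le>Suc q. xi j \<in> Vs) \<and> pev (Suc q) xi (t (Suc i)) = w \<and> P i xi" if "i < N" "w \<in> Vs" for i w
  proof -
    have "\<And>j. j \<le> q \<Longrightarrow> fst Y i j \<in> Vs"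
      using Y that(1) by (simp add: Ycoef_def)
    from exists_piece_solution[where q = q and y = "fst Y i", OF t_strict[OF that(1)] this that(2)
        \<open>0 < \<theta>\<close> \<open>0 < \<eta>\<close>]
    show ?thesis
      unfolding P_def by auto
  qed
  then obtain x where x: "x \<in> Xcoef Vs N t q" and XT: "pev (Suc q) (x (N - 1)) (t N) = z"
    and P: "\<And>i. i < N \<Longrightarrow> P i (x i)"
    using exists_continuous_chain[OF _ \<open>z \<in> Vs\<close>] by blast
  have "(1 - \<theta> / 2) * (\<Sum>i<N. Ynorm_piece a q (t i) (t (Suc i)) (fst Y i)) - real N * \<eta>
      \<le> (\<Sum>i<N. Bstar_piece a q (t i) (t (Suc i)) (fst Y i) (x i))"
    using sum_mono[of "{..<N}" "\<lambda>i. (1 - \<theta> / 2) * Ynorm_piece a q (t i) (t (Suc i)) (fst Y i) - \<eta>"] P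
    by (simp add: P_def sum_subtractf sum_distrib_left)
  moreover have "(\<Sum>i<N. Xnorm_piece Vs a q (t i) (t (Suc i)) (x i))
      \<le> (\<Sum>i<N. ((norm (pev (Suc q) (x i) (t (Suc i))))\<^sup>2 - (norm (pev (Suc q) (x i) (t i)))\<^sup>2)
           + (1 + \<theta>) * Ynorm_piece a q (t i) (t (Suc i)) (fst Y i) + \<eta>)"
    using P by (intro sum_mono) (simp add: P_def)
  ultimately show ?thesis
    using x XT by (auto simp: sum.distrib sum_distrib_left sum_end_values_telescope[OF x N_pos])
qed

lemma exists_nearly_aligned_X:
  assumes Y: "fst Y \<in> Ycoef Vs N q" and "0 < Ynorm_sq a N t q Y" and "0 < \<theta>"
  shows "\<exists>x\<in>Xcoef Vs N t q. (1 - \<theta>) * Ynorm_sq a N t q Y \<le> Bstar a N t q Y x \<and>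
    Xnorm_sq Vs a N t q x \<le> (1 + \<theta>)\<^sup>2 * Ynorm_sq a N t q Y"
proof -
  define A where "A = Ynorm_sq a N t q Y"
  define S where "S = (\<Sum>i<N. Ynorm_piece a q (t i) (t (Suc i)) (fst Y i))"
  define K where "K = 1 + 1 / \<theta>"
  have A: "A = (norm (snd Y))\<^sup>2 + S" and "0 < A" "0 < K"
    using assms(2,3) by (simp_all add: A_def S_def Ynorm_sq_eq_sum K_def add_pos_pos)
  obtain z where "z \<in> Vs" and z: "(norm (z - snd Y))\<^sup>2 < \<theta> * A / (4 * K)"
    using exists_V_near[of "\<theta> * A / (4 * K)" "snd Y"] \<open>0 < A\<close> \<open>0 < K\<close> \<open>0 < \<theta>\<close> by auto
  obtain x where "x \<in> Xcoef Vs N t q" and XT: "pev (Suc q) (x (N - 1)) (t N) = z"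
    and B: "(1 - \<theta> / 2) * S - real N * (\<theta> * A / (4 * N))
      \<le> (\<Sum>i<N. Bstar_piece a q (t i) (t (Suc i)) (fst Y i) (x i))"
    and X: "(\<Sum>i<N. Xnorm_piece Vs a q (t i) (t (Suc i)) (x i))
      \<le> (norm z)\<^sup>2 - (norm (pev (Suc q) (x 0) (t 0)))\<^sup>2 + (1 + \<theta>) * S + real N * (\<theta> * A / (4 * N))"
    using exists_backward_sweep[OF Y \<open>z \<in> Vs\<close> \<open>0 < \<theta>\<close>, of "\<theta> * A / (4 * N)"] \<open>0 < A\<close> \<open>0 < \<theta>\<close> N_pos
    unfolding S_def by auto
  have N\<eta>: "real N * (\<theta> * A / (4 * N)) = \<theta> * A / 4"
    using N_pos by simp
  have KE: "K * (norm (z - snd Y))\<^sup>2 \<le> \<theta> * A / 4"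
    using z \<open>0 < K\<close> by (simp add: field_simps)
  note pert = inner_perturbation[OF \<open>0 < \<theta>\<close>, of "snd Y" "z - snd Y", folded K_def, simplified]
  have "(1 - \<theta>) * A \<le> Bstar a N t q Y x"
  proof -
    have "(1 - \<theta>) * A = (1 - \<theta> / 2) * S + (1 - \<theta> / 2) * (norm (snd Y))\<^sup>2 - \<theta> * A / 4 - \<theta> * A / 4"
      by (simp add: A algebra_simps)
    then show ?thesis
      using B pert(1) KE N\<eta> unfolding Bstar_eq_sum XT by linarith
  qed
  moreover have "Xnorm_sq Vs a N t q x \<le> (1 + \<theta>)\<^sup>2 * A"
  proof -
    have "(1 + \<theta>) * S + (1 + \<theta>) * (norm (snd Y))\<^sup>2 = (1 + \<theta>) * A"
      by (simp add: A algebra_simps)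
    moreover have "(1 + \<theta>)\<^sup>2 * A = (1 + \<theta>) * A + \<theta> * A / 2 + (\<theta> * A / 2 + \<theta>\<^sup>2 * A)"
      by (simp add: power2_eq_square algebra_simps)
    moreover have "0 \<le> \<theta> * A / 2 + \<theta>\<^sup>2 * A"
      using \<open>0 < A\<close> \<open>0 < \<theta>\<close> by simp
    ultimately show ?thesis
      using X pert(2) KE N\<eta> unfolding Xnorm_sq_eq_sum by linarith
  qed
  ultimately show ?thesis
    using \<open>x \<in> Xcoef Vs N t q\<close> unfolding A_def by blast
qed

lemma exists_X_ratio_ge:
  assumes Y: "fst Y \<in> Ycoef Vs N q" and nz: "(\<exists>i<N. \<exists>j\<le>q. fst Y i j \<noteq> 0) \<or> snd Y \<noteq> 0"
    and "0 < \<epsilon>"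
  shows "\<exists>x\<in>Xcoef Vs N t q. (\<exists>i<N. \<exists>j\<le>q + 1. x i j \<noteq> 0) \<and>
    1 - \<epsilon> \<le> Bstar a N t q Y x / (sqrt (Ynorm_sq a N t q Y) * sqrt (Xnorm_sq Vs a N t q x))"
proof -
  define \<theta> where "\<theta> = min (1 / 2) (\<epsilon> / 2)"
  have "0 < \<theta>" "\<theta> \<le> 1 / 2" "1 - \<epsilon> \<le> 1 - 2 * \<theta>"
    using \<open>0 < \<epsilon>\<close> by (auto simp: \<theta>_def)
  have "0 < Ynorm_sq a N t q Y"
    by (rule Ynorm_sq_pos[OF Y nz])
  then obtain x where x: "x \<in> Xcoef Vs N t q"
    and B: "(1 - \<theta>) * Ynorm_sq a N t q Y \<le> Bstar a N t q Y x"
    and X: "Xnorm_sq Vs a N t q x \<le> (1 + \<theta>)\<^sup>2 * Ynorm_sq a N t q Y"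
    using exists_nearly_aligned_X[OF Y _ \<open>0 < \<theta>\<close>] by blast
  have "1 - 2 * \<theta> \<le> Bstar a N t q Y x / (sqrt (Ynorm_sq a N t q Y) * sqrt (Xnorm_sq Vs a N t q x))"
    by (rule ratio_ge_if_nearly_aligned[OF \<open>0 < Ynorm_sq a N t q Y\<close> \<open>0 < \<theta>\<close> \<open>\<theta> \<le> 1 / 2\<close> B X
          Bstar_le_norms[OF Y x]])
  moreover have "\<exists>i<N. \<exists>j\<le>q + 1. x i j \<noteq> 0"
  proof (rule ccontr)
    assume "\<not> (\<exists>i<N. \<exists>j\<le>q + 1. x i j \<noteq> 0)"
    then have "Bstar a N t q Y x = 0"
      using Bstar_eq_0_if_X_coeffs_0[OF Y] by blast
    moreover have "0 < (1 - \<theta>) * Ynorm_sq a N t q Y"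
      using \<open>0 < Ynorm_sq a N t q Y\<close> \<open>\<theta> \<le> 1 / 2\<close> by simp
    ultimately show False
      using B by simp
  qed
  ultimately show ?thesis
    using x \<open>1 - \<epsilon> \<le> 1 - 2 * \<theta>\<close> by force
qed

end

theorem theorem5p2:
  fixes Vs :: "'h::{real_inner,complete_space,second_countable_topology} set"
    and iV a :: "'h \<Rightarrow> 'h \<Rightarrow> real"
    and N q :: nat and t :: "nat \<Rightarrow> real"
  assumes "gelfand_form Vs iV a"
    and "Vs \<noteq> {0}"
    and "N \<ge> 1" and "t 0 = 0" and "\<forall>i<N. t i < t (Suc i)"
  defines "YS \<equiv> {Y. fst Y \<in> Ycoef Vs N q \<and>
                     ((\<exists>i<N. \<exists>j\<le>q. fst Y i j \<noteq> 0) \<or> snd Y \<noteq> 0)}"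
    and "XS \<equiv> {x. x \<in> Xcoef Vs N t q \<and> (\<exists>i<N. \<exists>j\<le>q+1. x i j \<noteq> 0)}"
    and "R \<equiv> \<lambda>Y x. ereal (Bstar a N t q Y x /
                   (sqrt (Ynorm_sq a N t q Y) * sqrt (Xnorm_sq Vs a N t q x)))"
  shows "(SUP Y\<in>YS. SUP x\<in>XS. R Y x) = 1 \<and> (INF Y\<in>YS. SUP x\<in>XS. R Y x) = 1"
proof -
  interpret semidiscrete Vs a N q t
    using energy_space_if_gelfand_form[OF assms(1,2)] assms(3,5)
    by (simp add: semidiscrete_def semidiscrete_axioms_def)
  have SUP_1: "(SUP x\<in>XS. R Y x) = 1" if "Y \<in> YS" for Y
  proof -
    have Y: "fst Y \<in> Ycoef Vs N q" "(\<exists>i<N. \<exists>j\<le>q. fst Y i j \<noteq> 0) \<or> snd Y \<noteq> 0"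
      using that by (simp_all add: YS_def)
    show ?thesis
      unfolding R_def XS_def
      by (rule SUP_ereal_eq_1_if_approx) (use Bstar_ratio_le_1[OF Y(1)] exists_X_ratio_ge[OF Y] in force)+
  qed
  obtain v where "v \<in> Vs" "v \<noteq> 0"
    using nontrivial subspace_0[OF subspace] by blast
  then have "YS \<noteq> {}"
    by (auto simp: YS_def Ycoef_def intro!: exI[of _ "(\<lambda>i j. 0, v)"])
  then show ?thesis
    using SUP_1 by (simp add: SUP_cong[OF refl SUP_1] INF_cong[OF refl SUP_1])
qed

end
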